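(* Let $(N\cup Z,Z)$ be an EZ-structure on a group $\Gamma$ (so $\Gamma$ acts on $N=(N\cup Z)-Z$), and assume that $N$ is a manifold (with or without boundary). Let $\mathcal N=(N\times I)/\equiv$, where each segment $p\times I$ with $p\in\partial N$ is collapsed to a point (so $\mathcal N=N\times I$ if $\partial N=\emptyset$), with the induced $\Gamma$-action, and let $\rho:\mathcal N\to N\hookrightarrow N\cup Z$ be the $\Gamma$-equivariant map induced by projection to $N$. Topologize $\mathcal N\cup Z$ as the closure of the image of the embedding $\mathcal N\to(\mathcal N\cup\infty)\times(N\cup Z)$, $x\mapsto(x,\rho(x))$, where $\mathcal N\cup\infty$ is the one-point compactification. Then $(\mathcal N\cup Z,Z)$ is an EZ-structure on $\Gamma$.
   Context: A Z-structure on a discrete group $\Gamma$ is a pair $(\bar X,Z)$ of spaces such that: (1) $\bar X$ is a Euclidean retract (a compact metrizable retract of some Euclidean space); (2) $Z$ is a Z-set in $\bar X$, i.e. a closed subset such that for every $\epsilon>0$ there is a map $\bar X\to\bar X-Z$ that is $\epsilon$-close to the identity; (3) $\bar X-Z$ admits a fixed point free, properly discontinuous, cocompact action of $\Gamma$; (4) for every compact $K\subset\bar X-Z$, the translates $\gamma K$, $\gamma\in\Gamma$, form a null sequence in $\bar X$: for every open cover $\mathcal U$ of $\bar X$, all but finitely many translates are contained in a single member of $\mathcal U$. An EZ-structure on $\Gamma$ is a Z-structure $(\bar X,Z)$ such that the $\Gamma$-action on $\bar X-Z$ extends to an action of $\Gamma$ on $\bar X$. *)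

theory Defs
  imports "HOL-Analysis.Analysis"
begin

text \<open>The group \<Gamma> is modelled as a type of class group_add (additive notation,
  not assumed commutative); a discrete group carries no topology.\<close>

definition euclidean_retract :: "'a topology \<Rightarrow> bool" where
  "euclidean_retract X \<longleftrightarrow> compact_space X \<and> metrizable_space X \<and>
     (\<exists>n S. S retract_of_space Euclidean_space n \<and>
            X homeomorphic_space subtopology (Euclidean_space n) S)"

text \<open>Z-set: closed, and for every \<epsilon> > 0 there is a map into the complement
  which is \<epsilon>-close to the identity (with respect to a compatible metric; for the
  compact metrizable spaces in question all compatible metrics give the same notion).\<close>
definition Z_set :: "'a topology \<Rightarrow> 'a set \<Rightarrow> bool" where
  "Z_set X Z \<longleftrightarrow> closedin X Z \<and>
     (\<exists>m. mtopology_of m = X \<and>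
        (\<forall>\<epsilon>>0. \<exists>f. continuous_map X X f \<and>
              (\<forall>x\<in>topspace X. f x \<notin> Z \<and> mdist m (f x) x < \<epsilon>)))"

definition top_action :: "('g::group_add \<Rightarrow> 'a \<Rightarrow> 'a) \<Rightarrow> 'a topology \<Rightarrow> bool" where
  "top_action \<phi> Y \<longleftrightarrow>
     (\<forall>g. homeomorphic_map Y Y (\<phi> g)) \<and>
     (\<forall>x\<in>topspace Y. \<phi> 0 x = x) \<and>
     (\<forall>g h. \<forall>x\<in>topspace Y. \<phi> (g + h) x = \<phi> g (\<phi> h x))"

definition fixed_point_free_action :: "('g::group_add \<Rightarrow> 'a \<Rightarrow> 'a) \<Rightarrow> 'a topology \<Rightarrow> bool" where
  "fixed_point_free_action \<phi> Y \<longleftrightarrow> (\<forall>g. \<forall>x\<in>topspace Y. \<phi> g x = x \<longrightarrow> g = 0)"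

definition properly_discontinuous_action :: "('g::group_add \<Rightarrow> 'a \<Rightarrow> 'a) \<Rightarrow> 'a topology \<Rightarrow> bool" where
  "properly_discontinuous_action \<phi> Y \<longleftrightarrow>
     (\<forall>K. compactin Y K \<longrightarrow> finite {g. \<phi> g ` K \<inter> K \<noteq> {}})"

definition cocompact_action :: "('g::group_add \<Rightarrow> 'a \<Rightarrow> 'a) \<Rightarrow> 'a topology \<Rightarrow> bool" where
  "cocompact_action \<phi> Y \<longleftrightarrow> (\<exists>K. compactin Y K \<and> (\<Union>g. \<phi> g ` K) = topspace Y)"

text \<open>Null condition: translates of compacta of X - Z form a null sequence in X.\<close>
definition null_translates :: "('g::group_add \<Rightarrow> 'a \<Rightarrow> 'a) \<Rightarrow> 'a topology \<Rightarrow> 'a set \<Rightarrow> bool" where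
  "null_translates \<phi> X Z \<longleftrightarrow>
     (\<forall>K. compactin (subtopology X (topspace X - Z)) K \<longrightarrow>
        (\<forall>\<U>. (\<forall>U\<in>\<U>. openin X U) \<and> topspace X \<subseteq> \<Union>\<U> \<longrightarrow>
              finite {g. \<not> (\<exists>U\<in>\<U>. \<phi> g ` K \<subseteq> U)}))"

definition Z_structure_via :: "('g::group_add \<Rightarrow> 'a \<Rightarrow> 'a) \<Rightarrow> 'a topology \<Rightarrow> 'a set \<Rightarrow> bool" where
  "Z_structure_via \<phi> X Z \<longleftrightarrow>
     euclidean_retract X \<and> Z_set X Z \<and>
     top_action \<phi> (subtopology X (topspace X - Z)) \<and>
     fixed_point_free_action \<phi> (subtopology X (topspace X - Z)) \<and>
     properly_discontinuous_action \<phi> (subtopology X (topspace X - Z)) \<and>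
     cocompact_action \<phi> (subtopology X (topspace X - Z)) \<and>
     null_translates \<phi> X Z"

definition EZ_structure_via :: "('g::group_add \<Rightarrow> 'a \<Rightarrow> 'a) \<Rightarrow> 'a topology \<Rightarrow> 'a set \<Rightarrow> bool" where
  "EZ_structure_via \<phi> X Z \<longleftrightarrow> Z_structure_via \<phi> X Z \<and> top_action \<phi> X"

definition half_space :: "nat \<Rightarrow> (nat \<Rightarrow> real) topology" where
  "half_space n = subtopology (Euclidean_space n) {x. 0 \<le> x 0}"

definition manifold_chart_at ::
    "'a topology \<Rightarrow> nat \<Rightarrow> 'a \<Rightarrow> 'a set \<Rightarrow> (nat \<Rightarrow> real) set \<Rightarrow> ('a \<Rightarrow> nat \<Rightarrow> real) \<Rightarrow> bool" where
  "manifold_chart_at X n x U V h \<longleftrightarrow> openin X U \<and> x \<in> U \<and> openin (half_space n) V \<and>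
      homeomorphic_map (subtopology X U) (subtopology (half_space n) V) h"

definition is_manifold :: "'a topology \<Rightarrow> bool" where
  "is_manifold X \<longleftrightarrow> Hausdorff_space X \<and> second_countable X \<and>
     (\<exists>n. \<forall>x\<in>topspace X. \<exists>U V h. manifold_chart_at X n x U V h)"

definition manifold_boundary :: "'a topology \<Rightarrow> 'a set" where
  "manifold_boundary X = {x \<in> topspace X. \<exists>n U V h. 0 < n \<and> manifold_chart_at X n x U V h \<and> h x 0 = 0}"

definition quotient_top :: "'a topology \<Rightarrow> ('a \<Rightarrow> 'b) \<Rightarrow> 'b topology" where
  "quotient_top X f = topology (\<lambda>U. U \<subseteq> f ` topspace X \<and> openin X {x \<in> topspace X. f x \<in> U})"

definition one_point_compactification :: "'a topology \<Rightarrow> 'a option topology" where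
  "one_point_compactification X = topology (\<lambda>U.
      U \<subseteq> insert None (Some ` topspace X) \<and> openin X {x. Some x \<in> U} \<and>
      (None \<in> U \<longrightarrow> compactin X (topspace X - {x. Some x \<in> U})))"

text \<open>N \<times> I with each segment p \<times> I, p \<in> \<partial>N, collapsed: points are represented by
  (p,t) with t = 0 whenever p \<in> \<partial>N; the topology is the quotient topology.\<close>
definition collapse_map :: "'a topology \<Rightarrow> 'a \<times> real \<Rightarrow> 'a \<times> real" where
  "collapse_map N = (\<lambda>(p,t). (p, if p \<in> manifold_boundary N then 0 else t))"

definition mapping_cyl :: "'a topology \<Rightarrow> ('a \<times> real) topology" where
  "mapping_cyl N = quotient_top (prod_topology N (top_of_set {0..1})) (collapse_map N)"

definition induced_action :: "('g \<Rightarrow> 'a \<Rightarrow> 'a) \<Rightarrow> 'g \<Rightarrow> 'a \<times> real \<Rightarrow> 'a \<times> real" where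
  "induced_action \<phi> g = (\<lambda>(p,t). (\<phi> g p, t))"

definition graph_embedding :: "'a \<times> real \<Rightarrow> ('a \<times> real) option \<times> 'a" where
  "graph_embedding x = (Some x, fst x)"

text \<open>\<N> \<union> Z: closure of the image of x \<mapsto> (x, \<rho> x) in (\<N> \<union> \<infinity>) \<times> (N \<union> Z).\<close>
definition compactified_carrier :: "'a topology \<Rightarrow> 'a set \<Rightarrow> (('a \<times> real) option \<times> 'a) set" where
  "compactified_carrier X Z =
     prod_topology (one_point_compactification (mapping_cyl (subtopology X (topspace X - Z)))) X
       closure_of (graph_embedding ` topspace (mapping_cyl (subtopology X (topspace X - Z))))"

definition compactified_space :: "'a topology \<Rightarrow> 'a set \<Rightarrow> (('a \<times> real) option \<times> 'a) topology" where
  "compactified_space X Z =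
     subtopology (prod_topology (one_point_compactification (mapping_cyl (subtopology X (topspace X - Z)))) X)
       (compactified_carrier X Z)"

end

(*
  Let height be the distance to Z \<union> \<partial>N, truncated at 1; it vanishes exactly on Z \<union> \<partial>N.
  The closure of the graph of \<rho> consists of the points (c, \<rho> c), c \<in> \<N>, and the points (\<infinity>, z),
  z \<in> Z.  Sending (p, t) to (p, t * height p) and (\<infinity>, z) to (z, 0) is a continuous bijection
  from the compact space \<N> \<union> Z onto the region R = {(p, r). 0 \<le> r \<le> height p} in X \<times> \<real>,
  hence a homeomorphism.  R is a retract of X \<times> \<real>, so it is a Euclidean retract with X, and the
  product metric on R makes the remaining axioms concrete: a push-off of X from Z, combined with
  lowering the height, pushes \<N> \<union> Z off Z; and far-away translates of a compactum of \<N> are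
  small, because their projections to X are small by the null condition for X and their
  heights are small by proper discontinuity, applied to the compactum where height is bounded
  below.
*)

theory Submission
  imports Defs "HOL-Homology.Invariance_of_Domain"
begin

section \<open>Quotient topologies and one-point compactifications\<close>

lemma openin_quotient_top:
  "openin (quotient_top T f) U \<longleftrightarrow> U \<subseteq> f ` topspace T \<and> openin T {x \<in> topspace T. f x \<in> U}"
proof -
  define P where "P U \<longleftrightarrow> U \<subseteq> f ` topspace T \<and> openin T {x \<in> topspace T. f x \<in> U}" for U
  have "P (S \<inter> U)" if "P S" "P U" for S U
  proof -
    have "{x \<in> topspace T. f x \<in> S \<inter> U} = {x \<in> topspace T. f x \<in> S} \<inter> {x \<in> topspace T. f x \<in> U}"
      by auto
    with that show ?thesis
      unfolding P_def by auto
  qed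
  moreover have "P (\<Union>K)" if "\<forall>U\<in>K. P U" for K
  proof -
    have "{x \<in> topspace T. f x \<in> \<Union>K} = (\<Union>U\<in>K. {x \<in> topspace T. f x \<in> U})"
      by auto
    with that show ?thesis
      unfolding P_def by auto
  qed
  ultimately have "istopology P"
    unfolding istopology_def by blast
  then show ?thesis
    unfolding quotient_top_def P_def by simp
qed

lemma topspace_quotient_top: "topspace (quotient_top T f) = f ` topspace T"
proof -
  have "{x \<in> topspace T. f x \<in> f ` topspace T} = topspace T"
    by auto
  then have "openin (quotient_top T f) (f ` topspace T)"
    by (simp add: openin_quotient_top)
  then show ?thesis
    using openin_subset openin_quotient_top[of T f "topspace (quotient_top T f)"] by blast
qed

lemma continuous_map_quotient_top: "continuous_map T (quotient_top T f) f"
  by (auto simp: continuous_map_def topspace_quotient_top openin_quotient_top)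

lemma continuous_map_from_quotient_top:
  assumes "continuous_map T W (k \<circ> f)"
  shows "continuous_map (quotient_top T f) W k"
  unfolding continuous_map_def
proof (intro conjI allI impI)
  show "k \<in> topspace (quotient_top T f) \<rightarrow> topspace W"
    using assms by (auto simp: topspace_quotient_top continuous_map_def)
  fix V
  assume "openin W V"
  moreover have "{x \<in> topspace T. f x \<in> {c \<in> topspace (quotient_top T f). k c \<in> V}}
      = {x \<in> topspace T. (k \<circ> f) x \<in> V}"
    by (auto simp: topspace_quotient_top)
  ultimately show "openin (quotient_top T f) {c \<in> topspace (quotient_top T f). k c \<in> V}"
    using assms by (simp add: openin_quotient_top continuous_map_def topspace_quotient_top)
qed

lemma closedin_quotient_top:
  assumes "K \<subseteq> f ` topspace T" "closedin T {x \<in> topspace T. f x \<in> K}"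
  shows "closedin (quotient_top T f) K"
proof -
  have "{x \<in> topspace T. f x \<in> f ` topspace T - K} = topspace T - {x \<in> topspace T. f x \<in> K}"
    by auto
  with assms show ?thesis
    by (simp add: closedin_def openin_quotient_top topspace_quotient_top)
qed

lemma openin_one_point_compactification:
  "openin (one_point_compactification T) U \<longleftrightarrow>
     U \<subseteq> insert None (Some ` topspace T) \<and> openin T {x. Some x \<in> U} \<and>
      (None \<in> U \<longrightarrow> compactin T (topspace T - {x. Some x \<in> U}))"
proof -
  define P where "P U \<longleftrightarrow> U \<subseteq> insert None (Some ` topspace T) \<and> openin T {x. Some x \<in> U} \<and>
      (None \<in> U \<longrightarrow> compactin T (topspace T - {x. Some x \<in> U}))" for U
  have "P (S \<inter> U)" if "P S" "P U" for S U
  proof -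
    have "{x. Some x \<in> S \<inter> U} = {x. Some x \<in> S} \<inter> {x. Some x \<in> U}"
      and "topspace T - {x. Some x \<in> S \<inter> U}
             = (topspace T - {x. Some x \<in> S}) \<union> (topspace T - {x. Some x \<in> U})"
      by auto
    with that show ?thesis
      unfolding P_def by (auto intro: openin_Int compactin_Un)
  qed
  moreover have "P (\<Union>K)" if K: "\<forall>U\<in>K. P U" for K
  proof -
    have "{x. Some x \<in> \<Union>K} = (\<Union>U\<in>K. {x. Some x \<in> U})"
      by auto
    then have open_K: "openin T {x. Some x \<in> \<Union>K}"
      using K unfolding P_def by auto
    have "compactin T (topspace T - {x. Some x \<in> \<Union>K})" if None: "None \<in> \<Union>K"
    proof -
      obtain U where "U \<in> K" "None \<in> U"
        using None by auto
      with K have "compactin T (topspace T - {x. Some x \<in> U})"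
        unfolding P_def by auto
      then show ?thesis
        by (rule closed_compactin) (use \<open>U \<in> K\<close> open_K in auto)
    qed
    with K open_K show ?thesis
      unfolding P_def by blast
  qed
  ultimately have "istopology P"
    unfolding istopology_def by blast
  then show ?thesis
    unfolding one_point_compactification_def P_def by simp
qed

lemma topspace_one_point_compactification:
  "topspace (one_point_compactification T) = insert None (Some ` topspace T)"
proof -
  have "{x. Some x \<in> insert None (Some ` topspace T)} = topspace T"
    by auto
  then have "openin (one_point_compactification T) (insert None (Some ` topspace T))"
    by (simp add: openin_one_point_compactification)
  then show ?thesis
    using openin_subset openin_one_point_compactification[of T "topspace (one_point_compactification T)"]
    by blast
qed

lemma compact_space_one_point_compactification: "compact_space (one_point_compactification T)"
  unfolding compact_space_def compactin_def
proof (intro conjI allI impI)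
  fix \<U>
  assume \<U>: "(\<forall>U\<in>\<U>. openin (one_point_compactification T) U)
             \<and> topspace (one_point_compactification T) \<subseteq> \<Union>\<U>"
  then obtain U0 where U0: "U0 \<in> \<U>" "None \<in> U0"
    by (auto simp: topspace_one_point_compactification)
  with \<U> have "compactin T (topspace T - {x. Some x \<in> U0})"
    by (auto simp: openin_one_point_compactification)
  moreover have "\<forall>V\<in>(\<lambda>U. {x. Some x \<in> U}) ` \<U>. openin T V"
    and "topspace T - {x. Some x \<in> U0} \<subseteq> \<Union>((\<lambda>U. {x. Some x \<in> U}) ` \<U>)"
    using \<U> by (auto simp: openin_one_point_compactification topspace_one_point_compactification)
  ultimately obtain \<F> where \<F>: "finite \<F>" "\<F> \<subseteq> (\<lambda>U. {x. Some x \<in> U}) ` \<U>"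
      "topspace T - {x. Some x \<in> U0} \<subseteq> \<Union>\<F>"
    unfolding compactin_def by meson
  then obtain \<G> where "\<G> \<subseteq> \<U>" "finite \<G>" "\<F> = (\<lambda>U. {x. Some x \<in> U}) ` \<G>"
    by (meson finite_subset_image)
  with \<F> U0 show "\<exists>\<F>. finite \<F> \<and> \<F> \<subseteq> \<U> \<and> topspace (one_point_compactification T) \<subseteq> \<Union>\<F>"
    by (intro exI[of _ "insert U0 \<G>"]) (auto simp: topspace_one_point_compactification)
qed auto

lemma openin_one_point_compactification_image_Some:
  "openin T V \<Longrightarrow> openin (one_point_compactification T) (Some ` V)"
  using openin_subset[of T V] by (auto simp: openin_one_point_compactification image_iff)

lemma continuous_map_the_one_point_compactification:
  "continuous_map (subtopology (one_point_compactification T) (Some ` topspace T)) T the"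
  unfolding continuous_map_def
proof (intro conjI allI impI)
  show "the \<in> topspace (subtopology (one_point_compactification T) (Some ` topspace T)) \<rightarrow> topspace T"
    by (auto simp: topspace_one_point_compactification)
  fix V
  assume V: "openin T V"
  then have "{x \<in> topspace (subtopology (one_point_compactification T) (Some ` topspace T)). the x \<in> V}
        = Some ` topspace T \<inter> Some ` V"
    using openin_subset by (auto simp: topspace_one_point_compactification)
  with V show "openin (subtopology (one_point_compactification T) (Some ` topspace T))
          {x \<in> topspace (subtopology (one_point_compactification T) (Some ` topspace T)). the x \<in> V}"
    by (auto simp: openin_subtopology intro: openin_one_point_compactification_image_Some)
qed

section \<open>Metric spaces\<close>

lemmas continuous_map_euclideanreal_iff =
  Met_TC.continuous_map_to_metric[unfolded mtopology_is_euclidean mball_eq_ball]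

lemma continuous_map_real_dominated:
  assumes W: "openin T W" and f: "continuous_map (subtopology T W) euclideanreal f"
    and g: "continuous_map T euclideanreal g"
    and bound: "\<And>x. x \<in> topspace T \<Longrightarrow> \<bar>f x\<bar> \<le> g x"
    and vanish: "\<And>x. x \<in> topspace T - W \<Longrightarrow> g x = 0"
  shows "continuous_map T euclideanreal f"
  unfolding continuous_map_euclideanreal_iff
proof (intro ballI allI impI)
  fix x and \<epsilon> :: real
  assume x: "x \<in> topspace T" and "\<epsilon> > 0"
  show "\<exists>U. openin T U \<and> x \<in> U \<and> (\<forall>y\<in>U. f y \<in> ball (f x) \<epsilon>)"
  proof (cases "x \<in> W")
    case True
    with x have "x \<in> topspace (subtopology T W)"
      by simp
    with f \<open>\<epsilon> > 0\<close> obtain U where "openin (subtopology T W) U" "x \<in> U"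
        "\<forall>y\<in>U. f y \<in> ball (f x) \<epsilon>"
      unfolding continuous_map_euclideanreal_iff by blast
    with W show ?thesis
      using openin_trans_full by blast
  next
    case False
    with x have "f x = 0"
      using bound[of x] vanish[of x] by simp
    have "openin T {y \<in> topspace T. g y \<in> {..<\<epsilon>}}"
      using g by (rule openin_continuous_map_preimage) simp
    moreover have "x \<in> {y \<in> topspace T. g y \<in> {..<\<epsilon>}}"
      using x False vanish[of x] \<open>\<epsilon> > 0\<close> by simp
    moreover have "f y \<in> ball (f x) \<epsilon>" if "y \<in> {y \<in> topspace T. g y \<in> {..<\<epsilon>}}" for y
      using that bound[of y] \<open>f x = 0\<close> by (simp add: dist_real_def)
    ultimately show ?thesis
      by blast
  qed
qed

lemma homeomorphic_map_pullback_metric: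
  assumes F: "homeomorphic_map Y (mtopology_of m) F"
  defines "m' \<equiv> metric (topspace Y, \<lambda>a b. mdist m (F a) (F b))"
  shows "mtopology_of m' = Y" and "mspace m' = topspace Y"
    and "mdist m' = (\<lambda>a b. mdist m (F a) (F b))"
proof -
  obtain F' where FF': "homeomorphic_maps Y (mtopology_of m) F F'"
    using F homeomorphic_map_maps by blast
  have FY: "F \<in> topspace Y \<rightarrow> mspace m" and F'm: "F' \<in> mspace m \<rightarrow> topspace Y"
    and F'F: "\<And>x. x \<in> topspace Y \<Longrightarrow> F' (F x) = x" and FF'_id: "\<And>y. y \<in> mspace m \<Longrightarrow> F (F' y) = y"
    using FF' unfolding homeomorphic_maps_def continuous_map_def by auto
  have MS: "Metric_space (topspace Y) (\<lambda>a b. mdist m (F a) (F b))"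
  proof
    show "mdist m (F x) (F y) = 0 \<longleftrightarrow> x = y" if "x \<in> topspace Y" "y \<in> topspace Y" for x y
      using that FY F'F by (metis PiE mdist_zero)
    show "mdist m (F x) (F z) \<le> mdist m (F x) (F y) + mdist m (F y) (F z)"
      if "x \<in> topspace Y" "y \<in> topspace Y" "z \<in> topspace Y" for x y z
      using that FY by (auto intro: mdist_triangle)
  qed (auto simp: mdist_commute)
  show mspace: "mspace m' = topspace Y" and mdist: "mdist m' = (\<lambda>a b. mdist m (F a) (F b))"
    using Metric_space.mspace_metric[OF MS] Metric_space.mdist_metric[OF MS] by (simp_all add: m'_def)
  have "Lipschitz_continuous_map m' m F" "Lipschitz_continuous_map m m' F'"
    unfolding Lipschitz_continuous_map_def mspace mdist
    using FY F'm FF'_id by (auto intro!: exI[of _ 1])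
  then have "homeomorphic_map (mtopology_of m') (mtopology_of m) F"
    unfolding homeomorphic_map_maps homeomorphic_maps_def
    using Lipschitz_continuous_imp_continuous_map F'F FF'_id mspace by (metis topspace_mtopology_of)
  then show "mtopology_of m' = Y"
    using F unfolding topology_eq by (simp add: homeomorphic_map_openness_eq mspace)
qed

definition capped_setdist :: "'a metric \<Rightarrow> 'a set \<Rightarrow> 'a \<Rightarrow> real" where
  "capped_setdist m A p = (if A = {} then 1 else min 1 (INF a\<in>A. mdist m p a))"

lemma capped_setdist_bounds: "0 \<le> capped_setdist m A p" "capped_setdist m A p \<le> 1"
  unfolding capped_setdist_def by (auto intro: cINF_greatest)

lemma capped_setdist_Lipschitz:
  assumes "A \<subseteq> mspace m" "p \<in> mspace m" "q \<in> mspace m"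
  shows "\<bar>capped_setdist m A p - capped_setdist m A q\<bar> \<le> mdist m p q"
proof (cases "A = {}")
  case False
  have INF_le: "(INF a\<in>A. mdist m x a) \<le> mdist m x y + (INF a\<in>A. mdist m y a)"
    if "x \<in> mspace m" "y \<in> mspace m" for x y
  proof -
    have "(INF a\<in>A. mdist m x a) - mdist m x y \<le> mdist m y a" if "a \<in> A" for a
    proof -
      have "(INF a\<in>A. mdist m x a) \<le> mdist m x a"
        by (rule cINF_lower) (auto intro: bdd_belowI[of _ 0] that)
      also have "\<dots> \<le> mdist m x y + mdist m y a"
        using assms \<open>x \<in> mspace m\<close> \<open>y \<in> mspace m\<close> that by (auto intro: mdist_triangle)
      finally show ?thesis
        by simp
    qed
    then have "(INF a\<in>A. mdist m x a) - mdist m x y \<le> (INF a\<in>A. mdist m y a)"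
      using False by (intro cINF_greatest) auto
    then show ?thesis
      by simp
  qed
  show ?thesis
    using INF_le[of p q] INF_le[of q p] assms False
    unfolding capped_setdist_def by (auto simp: mdist_commute min_def abs_if)
qed (simp add: capped_setdist_def)

lemma continuous_map_capped_setdist:
  assumes "A \<subseteq> mspace m"
  shows "continuous_map (mtopology_of m) euclideanreal (capped_setdist m A)"
proof -
  have "Lipschitz_continuous_map m euclidean_metric (capped_setdist m A)"
    unfolding Lipschitz_continuous_map_def
    using capped_setdist_Lipschitz[OF assms] by (auto simp: dist_real_def intro!: exI[of _ 1])
  then show ?thesis
    using Lipschitz_continuous_imp_continuous_map by fastforce
qed

lemma capped_setdist_eq_0_iff:
  assumes "closedin (mtopology_of m) A" "p \<in> mspace m"
  shows "capped_setdist m A p = 0 \<longleftrightarrow> p \<in> A"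
proof
  assume "p \<in> A"
  then have "(INF a\<in>A. mdist m p a) \<le> mdist m p p"
    by (intro cINF_lower) (auto intro: bdd_belowI[of _ 0])
  moreover have "0 \<le> (INF a\<in>A. mdist m p a)"
    using \<open>p \<in> A\<close> by (intro cINF_greatest) auto
  moreover have "mdist m p p = 0"
    using assms(2) by simp
  ultimately show "capped_setdist m A p = 0"
    using \<open>p \<in> A\<close> by (auto simp: capped_setdist_def)
next
  assume zero: "capped_setdist m A p = 0"
  show "p \<in> A"
  proof (rule ccontr)
    assume "p \<notin> A"
    moreover have "openin (mtopology_of m) (mspace m - A)"
      using assms(1) by (metis closedin_def topspace_mtopology_of)
    ultimately obtain r where "r > 0" and r: "mball_of m p r \<subseteq> mspace m - A"
      using assms(2) unfolding mtopology_of_def mball_of_def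
      by (meson DiffI Metric_space.openin_mtopology Metric_space_mspace_mdist)
    have "A \<noteq> {}"
      using zero by (auto simp: capped_setdist_def)
    moreover have "r \<le> mdist m p a" if "a \<in> A" for a
      using r that assms closedin_subset[OF assms(1)] by (force simp: not_less)
    ultimately have "r \<le> (INF a\<in>A. mdist m p a)"
      by (rule cINF_greatest)
    then have "min 1 r \<le> capped_setdist m A p"
      using \<open>A \<noteq> {}\<close> unfolding capped_setdist_def by auto
    with \<open>r > 0\<close> zero show False
      by simp
  qed
qed

section \<open>Euclidean spaces and Euclidean retracts\<close>

lemma continuous_map_Euclidean_space_coordinate:
  "continuous_map (Euclidean_space n) euclideanreal (\<lambda>x. x i)"
  unfolding Euclidean_space_def
  by (rule continuous_map_from_subtopology) (rule continuous_map_product_projection, simp)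

lemma continuous_map_into_Euclidean_space:
  assumes "\<And>i. continuous_map T euclideanreal (\<lambda>z. f z i)"
    and "\<And>z. z \<in> topspace T \<Longrightarrow> f z \<in> topspace (Euclidean_space k)"
  shows "continuous_map T (Euclidean_space k) f"
  unfolding Euclidean_space_def continuous_map_in_subtopology
  using assms by (auto simp: continuous_map_componentwise_UNIV topspace_Euclidean_space)

lemma continuous_map_Euclidean_space_truncate:
  "continuous_map (Euclidean_space (Suc n)) (Euclidean_space n) (\<lambda>x. x(n := 0))"
proof (rule continuous_map_into_Euclidean_space)
  show "continuous_map (Euclidean_space (Suc n)) euclideanreal (\<lambda>z. (z(n := 0)) i)" for i
    by (cases "i = n") (simp_all add: continuous_map_Euclidean_space_coordinate)
qed (auto simp: topspace_Euclidean_space)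

lemma continuous_map_Euclidean_space_extend:
  assumes f: "continuous_map T (Euclidean_space n) f" and g: "continuous_map T euclideanreal g"
  shows "continuous_map T (Euclidean_space (Suc n)) (\<lambda>z. (f z)(n := g z))"
proof (rule continuous_map_into_Euclidean_space)
  show "continuous_map T euclideanreal (\<lambda>z. ((f z)(n := g z)) i)" for i
    using g continuous_map_compose[OF f continuous_map_Euclidean_space_coordinate[of n i]]
    by (cases "i = n") (simp_all add: o_def)
  show "(f z)(n := g z) \<in> topspace (Euclidean_space (Suc n))" if "z \<in> topspace T" for z
    using continuous_map_image_subset_topspace[OF f] that by (auto simp: topspace_Euclidean_space)
qed

lemma openin_Euclidean_space_coordinate_perturbation:
  assumes S: "openin (Euclidean_space k) S" and b: "b \<in> S" and "i < k"
  obtains \<epsilon> where "\<epsilon> > 0" "\<And>t. \<bar>t\<bar> < \<epsilon> \<Longrightarrow> b(i := b i + t) \<in> S"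
proof -
  have "continuous_map euclideanreal (Euclidean_space k) (\<lambda>t. b(i := b i + t))"
    using openin_subset[OF S] b \<open>i < k\<close>
    by (intro continuous_map_into_Euclidean_space)
       (auto simp: topspace_Euclidean_space intro!: continuous_intros)
  with S have "open {t. b(i := b i + t) \<in> S}"
    using openin_continuous_map_preimage by fastforce
  moreover have "0 \<in> {t. b(i := b i + t) \<in> S}"
    using b by simp
  ultimately obtain \<epsilon> where "\<epsilon> > 0" "ball 0 \<epsilon> \<subseteq> {t. b(i := b i + t) \<in> S}"
    using open_contains_ball by blast
  then show ?thesis
    by (intro that[of \<epsilon>]) (auto simp: dist_real_def)
qed

lemma openin_Euclidean_space_nonneg_coordinate:
  assumes "openin (Euclidean_space k) S" "S \<subseteq> {x. 0 \<le> x i}" "b \<in> S" "i < k"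
  shows "0 < b i"
proof -
  obtain \<epsilon> where "\<epsilon> > 0" and \<epsilon>: "\<And>t. \<bar>t\<bar> < \<epsilon> \<Longrightarrow> b(i := b i + t) \<in> S"
    using openin_Euclidean_space_coordinate_perturbation assms by metis
  then have "b(i := b i - \<epsilon> / 2) \<in> S"
    using \<epsilon>[of "- \<epsilon> / 2"] by simp
  with assms(2) \<open>\<epsilon> > 0\<close> show ?thesis
    by force
qed

lemma homeomorphic_maps_prod_Euclidean_space:
  assumes e: "homeomorphic_maps X (subtopology (Euclidean_space n) S) e e'"
    and R: "R \<subseteq> topspace X \<times> UNIV"
  defines "emb \<equiv> \<lambda>z. (e (fst z))(n := snd z)"
  shows "homeomorphic_maps (subtopology (prod_topology X euclideanreal) R)
           (subtopology (Euclidean_space (Suc n)) (emb ` R)) emb (\<lambda>x. (e' (x(n := 0)), x n))"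
    and "emb ` R \<subseteq> topspace (Euclidean_space (Suc n))"
proof -
  have e_S: "continuous_map X (subtopology (Euclidean_space n) S) e"
    and e'_cont: "continuous_map (subtopology (Euclidean_space n) S) X e'"
    and e'e: "\<And>p. p \<in> topspace X \<Longrightarrow> e' (e p) = p"
    using e unfolding homeomorphic_maps_def by auto
  then have e_cont: "continuous_map X (Euclidean_space n) e"
    and eS: "\<And>p. p \<in> topspace X \<Longrightarrow> e p \<in> S \<inter> topspace (Euclidean_space n)"
    using continuous_map_image_subset_topspace[OF e_S] by (auto simp: continuous_map_in_subtopology)
  have e_n: "(e p)(n := 0) = e p" if "p \<in> topspace X" for p
    using eS[OF that] by (auto simp: topspace_Euclidean_space fun_eq_iff)
  have emb_trunc: "(emb z)(n := 0) = e (fst z)" "emb z n = snd z" if "z \<in> R" for z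
    using e_n R that by (auto simp: emb_def)
  have emb_cont: "continuous_map (subtopology (prod_topology X euclideanreal) R) (Euclidean_space (Suc n)) emb"
    unfolding emb_def using continuous_map_compose[OF continuous_map_fst e_cont]
    by (intro continuous_map_Euclidean_space_extend continuous_map_from_subtopology)
       (auto simp: o_def continuous_map_snd)
  moreover have "continuous_map (subtopology (Euclidean_space (Suc n)) (emb ` R)) X (\<lambda>x. e' (x(n := 0)))"
  proof -
    have "continuous_map (subtopology (Euclidean_space (Suc n)) (emb ` R))
        (subtopology (Euclidean_space n) S) (\<lambda>x. x(n := 0))"
      using continuous_map_from_subtopology[OF continuous_map_Euclidean_space_truncate] emb_trunc eS R
      by (auto simp: continuous_map_in_subtopology)
    then show ?thesis
      using e'_cont continuous_map_compose by (fastforce simp: o_def)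
  qed
  moreover have "continuous_map (subtopology (Euclidean_space (Suc n)) (emb ` R)) euclideanreal (\<lambda>x. x n)"
    using continuous_map_Euclidean_space_coordinate by (rule continuous_map_from_subtopology)
  ultimately show "homeomorphic_maps (subtopology (prod_topology X euclideanreal) R)
           (subtopology (Euclidean_space (Suc n)) (emb ` R)) emb (\<lambda>x. (e' (x(n := 0)), x n))"
    unfolding homeomorphic_maps_def continuous_map_in_subtopology
    using emb_trunc e'e R by (auto simp: continuous_map_pairwise o_def)
  show "emb ` R \<subseteq> topspace (Euclidean_space (Suc n))"
    using continuous_map_image_subset_topspace[OF emb_cont] R by auto
qed

lemma continuous_map_clamp_under_graph:
  assumes q: "continuous_map T X q" and s: "continuous_map T euclideanreal s"
    and h: "continuous_map X euclideanreal h" "\<And>p. p \<in> topspace X \<Longrightarrow> 0 \<le> h p"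
  shows "continuous_map T
      (subtopology (prod_topology X euclideanreal) {z. fst z \<in> topspace X \<and> 0 \<le> snd z \<and> snd z \<le> h (fst z)})
      (\<lambda>x. (q x, max 0 (min (s x) (h (q x)))))"
proof -
  have "continuous_map T euclideanreal (\<lambda>x. max 0 (min (s x) (h (q x))))"
    using continuous_map_compose[OF q h(1)] s
    by (intro continuous_map_real_max continuous_map_real_min) (auto simp: o_def)
  with q have "continuous_map T (prod_topology X euclideanreal) (\<lambda>x. (q x, max 0 (min (s x) (h (q x)))))"
    by (simp add: continuous_map_pairwise o_def)
  moreover have "q x \<in> topspace X \<and> 0 \<le> h (q x)" if "x \<in> topspace T" for x
    using continuous_map_image_subset_topspace[OF q] that h(2) by blast
  ultimately show ?thesis
    by (auto simp: continuous_map_in_subtopology)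
qed

lemma retract_of_space_region_under_graph:
  assumes S: "S retract_of_space Euclidean_space n"
    and e: "homeomorphic_maps X (subtopology (Euclidean_space n) S) e e'"
    and h: "continuous_map X euclideanreal h" "\<And>p. p \<in> topspace X \<Longrightarrow> 0 \<le> h p"
  defines "R \<equiv> {z. fst z \<in> topspace X \<and> 0 \<le> snd z \<and> snd z \<le> h (fst z)}"
  shows "(\<lambda>z. (e (fst z))(n := snd z)) ` R retract_of_space Euclidean_space (Suc n)"
proof -
  define emb where "emb z = (e (fst z))(n := snd z)" for z
  obtain r where r: "continuous_map (Euclidean_space n) (subtopology (Euclidean_space n) S) r"
    and r_id: "\<And>x. x \<in> S \<Longrightarrow> r x = x"
    using S unfolding retract_of_space_def by blast
  define q where "q x = e' (r (x(n := 0)))" for x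
  have "R \<subseteq> topspace X \<times> UNIV"
    by (auto simp: R_def)
  note emb = homeomorphic_maps_prod_Euclidean_space[OF e this, folded emb_def]
  have "continuous_map (Euclidean_space (Suc n)) X q"
    using continuous_map_compose[OF continuous_map_compose[OF continuous_map_Euclidean_space_truncate r]]
      e unfolding homeomorphic_maps_def q_def o_def by blast
  then have "continuous_map (Euclidean_space (Suc n)) (subtopology (prod_topology X euclideanreal) R)
      (\<lambda>x. (q x, max 0 (min (x n) (h (q x)))))"
    unfolding R_def using continuous_map_Euclidean_space_coordinate h
    by (rule continuous_map_clamp_under_graph)
  then have "continuous_map (Euclidean_space (Suc n)) (subtopology (Euclidean_space (Suc n)) (emb ` R))
      (\<lambda>x. emb (q x, max 0 (min (x n) (h (q x)))))"
    using emb(1) continuous_map_compose unfolding homeomorphic_maps_def o_def by fastforce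
  moreover have "emb (q x, max 0 (min (x n) (h (q x)))) = x" if "x \<in> emb ` R" for x
  proof -
    obtain z where z: "z \<in> R" "x = emb z"
      using \<open>x \<in> emb ` R\<close> by blast
    have "e (fst z) \<in> S \<inter> topspace (Euclidean_space n)" "e' (e (fst z)) = fst z"
      using e z(1) continuous_map_image_subset_topspace[of X "subtopology (Euclidean_space n) S" e]
      unfolding homeomorphic_maps_def R_def by auto
    moreover have "x(n := 0) = e (fst z)" "x n = snd z"
      using z \<open>e (fst z) \<in> S \<inter> topspace (Euclidean_space n)\<close>
      by (auto simp: emb_def topspace_Euclidean_space fun_eq_iff)
    ultimately show ?thesis
      using r_id z by (auto simp: q_def R_def)
  qed
  ultimately show ?thesis
    using emb(2) unfolding retract_of_space_def emb_def[abs_def] by blast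
qed

lemma euclidean_retract_region_under_graph:
  assumes "euclidean_retract X" "continuous_map X euclideanreal h" "\<And>p. p \<in> topspace X \<Longrightarrow> 0 \<le> h p"
  obtains n T where "T retract_of_space Euclidean_space n"
    "subtopology (prod_topology X euclideanreal) {z. fst z \<in> topspace X \<and> 0 \<le> snd z \<and> snd z \<le> h (fst z)}
       homeomorphic_space subtopology (Euclidean_space n) T"
proof -
  obtain n S e e' where "S retract_of_space Euclidean_space n"
    and e: "homeomorphic_maps X (subtopology (Euclidean_space n) S) e e'"
    using assms(1) unfolding euclidean_retract_def homeomorphic_space_def by blast
  moreover have "{z. fst z \<in> topspace X \<and> 0 \<le> snd z \<and> snd z \<le> h (fst z)} \<subseteq> topspace X \<times> UNIV"
    by auto
  ultimately show ?thesis
    using that retract_of_space_region_under_graph[OF _ e assms(2,3)]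
      homeomorphic_maps_prod_Euclidean_space(1)[OF e] homeomorphic_maps_imp_homeomorphic_space
    by meson
qed

lemma euclidean_retract_nonempty:
  assumes "euclidean_retract X"
  shows "topspace X \<noteq> {}"
proof -
  obtain n S r where r: "continuous_map (Euclidean_space n) (subtopology (Euclidean_space n) S) r"
    and hom: "X homeomorphic_space subtopology (Euclidean_space n) S"
    using assms unfolding euclidean_retract_def retract_of_space_def by blast
  have "(\<lambda>i. 0) \<in> topspace (Euclidean_space n)"
    by (simp add: topspace_Euclidean_space)
  then have "subtopology (Euclidean_space n) S \<noteq> trivial_topology"
    using continuous_map_image_subset_topspace[OF r] by fastforce
  then show ?thesis
    using homeomorphic_empty_space[OF hom] by simp
qed

section \<open>Manifold boundaries\<close>

lemma topspace_half_space: "topspace (half_space n) = {x. (\<forall>i\<ge>n. x i = 0) \<and> 0 \<le> x 0}"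
  by (auto simp: half_space_def topspace_Euclidean_space)

lemma openin_half_space_iff:
  "openin (half_space n) S \<longleftrightarrow> (\<exists>B. openin (Euclidean_space n) B \<and> S = B \<inter> {x. 0 \<le> x 0})"
  by (auto simp: half_space_def openin_subtopology)

lemma manifold_chart_atD:
  assumes "manifold_chart_at T n q U V h" "x \<in> U"
  shows "h x \<in> V" "h x \<in> topspace (half_space n)" "U \<subseteq> topspace T" "openin T U"
proof -
  have U: "openin T U" and h: "homeomorphic_map (subtopology T U) (subtopology (half_space n) V) h"
    using assms(1) unfolding manifold_chart_at_def by auto
  show "U \<subseteq> topspace T" "openin T U"
    using U openin_subset by auto
  moreover have "h ` (topspace T \<inter> U) = topspace (half_space n) \<inter> V"
    using homeomorphic_imp_surjective_map[OF h] by simp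
  ultimately show "h x \<in> V" "h x \<in> topspace (half_space n)"
    using assms(2) by auto
qed

lemma continuous_map_manifold_chart:
  assumes "manifold_chart_at T n q U V h"
  shows "continuous_map (subtopology T U) (Euclidean_space n) h"
  using assms homeomorphic_imp_continuous_map[of "subtopology T U" "subtopology (half_space n) V" h]
  unfolding manifold_chart_at_def half_space_def continuous_map_in_subtopology by blast

lemma openin_half_space_manifold_chart_image:
  assumes c: "manifold_chart_at T n q U V h" and W: "openin T W" "W \<subseteq> U"
  shows "openin (half_space n) (h ` W)"
proof -
  have h: "homeomorphic_map (subtopology T U) (subtopology (half_space n) V) h"
    and "openin T U" "openin (half_space n) V"
    using c unfolding manifold_chart_at_def by auto
  moreover have "openin (subtopology T U) W"
    using openin_open_subtopology[OF \<open>openin T U\<close>] W by blast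
  then have "openin (subtopology (half_space n) V) (h ` W)"
    using homeomorphic_map_openness[OF h] openin_subset by metis
  then show ?thesis
    using \<open>openin (half_space n) V\<close> by (rule openin_trans_full)
qed

lemma openin_Euclidean_space_manifold_chart_interior:
  assumes c: "manifold_chart_at T n q U V h" and W: "openin T W" "W \<subseteq> U"
  shows "openin (Euclidean_space n) (h ` W \<inter> {x. 0 < x 0})"
proof -
  obtain B where B: "openin (Euclidean_space n) B" "h ` W = B \<inter> {x. 0 \<le> x 0}"
    using openin_half_space_manifold_chart_image[OF assms] by (auto simp: openin_half_space_iff)
  have "openin (Euclidean_space n) {x \<in> topspace (Euclidean_space n). x 0 \<in> {0<..}}"
    by (rule openin_continuous_map_preimage[OF continuous_map_Euclidean_space_coordinate]) simp
  with B(1) have "openin (Euclidean_space n) (B \<inter> {x \<in> topspace (Euclidean_space n). x 0 \<in> {0<..}})"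
    by (rule openin_Int)
  moreover have "B \<inter> {x \<in> topspace (Euclidean_space n). x 0 \<in> {0<..}} = h ` W \<inter> {x. 0 < x 0}"
    using B openin_subset[OF B(1)] by auto
  ultimately show ?thesis
    by simp
qed

lemma openin_Euclidean_space_chart_transition:
  assumes c: "manifold_chart_at T n q U V h" and c': "manifold_chart_at T n' q' U' V' h'"
    and "n' \<le> n" and A: "openin (Euclidean_space n) A" "A \<subseteq> h ` (U \<inter> U')" "A \<subseteq> {x. 0 \<le> x 0}"
  shows "openin (Euclidean_space n) (h' ` {x \<in> U \<inter> U'. h x \<in> A})"
proof -
  define W where "W = {x \<in> U \<inter> U'. h x \<in> A}"
  have h: "homeomorphic_map (subtopology T U) (subtopology (half_space n) V) h"
    and U: "openin T U"
    using c unfolding manifold_chart_at_def by auto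
  have "A \<subseteq> topspace (half_space n) \<inter> V"
    using A(2) manifold_chart_atD[OF c] by blast
  then have "h ` (topspace (subtopology T U) \<inter> W) = topspace (subtopology (half_space n) V) \<inter> A"
    using A(2) openin_subset[OF U] by (auto simp: W_def)
  from homeomorphic_map_subtopologies[OF h this]
  have "homeomorphic_map (subtopology T W) (subtopology (Euclidean_space n) A) h"
    using A(3) \<open>A \<subseteq> topspace (half_space n) \<inter> V\<close>
    by (simp add: subtopology_subtopology W_def half_space_def Int_absorb1 Int_absorb2 Int_assoc)
  then obtain h\<^sub>i where hi: "homeomorphic_maps (subtopology T W) (subtopology (Euclidean_space n) A) h h\<^sub>i"
    using homeomorphic_map_maps by blast
  have "Euclidean_space n' = subtopology (Euclidean_space n) (topspace (Euclidean_space n'))"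
    by (metis Euclidean_space_def \<open>n' \<le> n\<close> inf.absorb_iff2 subset_Euclidean_space
        subtopology_subtopology topspace_Euclidean_space)
  then have "continuous_map (subtopology T U') (Euclidean_space n) h'"
    using continuous_map_manifold_chart[OF c'] continuous_map_in_subtopology by metis
  then have "continuous_map (subtopology T W) (Euclidean_space n) h'"
    by (rule continuous_map_from_subtopology_mono) (auto simp: W_def)
  then have "continuous_map (subtopology (Euclidean_space n) A) (Euclidean_space n) (h' \<circ> h\<^sub>i)"
    using hi continuous_map_compose unfolding homeomorphic_maps_def by blast
  moreover have "A \<subseteq> topspace (Euclidean_space n)" "W \<subseteq> topspace T"
    using openin_subset[OF A(1)] openin_subset[OF U] by (auto simp: W_def)
  then have hi_W: "\<And>y. y \<in> A \<Longrightarrow> h\<^sub>i y \<in> W \<and> h (h\<^sub>i y) = y"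
    and hi_h: "\<And>x. x \<in> W \<Longrightarrow> h\<^sub>i (h x) = x"
    using hi unfolding homeomorphic_maps_def continuous_map_def by auto
  moreover have "inj_on h' U'"
    using homeomorphic_imp_injective_map[of "subtopology T U'"] c' manifold_chart_atD(3)[OF c']
    unfolding manifold_chart_at_def by (fastforce simp: Int_absorb1)
  then have "inj_on (h' \<circ> h\<^sub>i) A"
    using hi_W unfolding inj_on_def W_def by (metis (no_types, lifting) comp_apply mem_Collect_eq IntD2)
  moreover have "(h' \<circ> h\<^sub>i) ` A = h' ` W"
    using hi_W hi_h by (force simp: W_def)
  ultimately show ?thesis
    using invariance_of_domain_Euclidean_space[OF A(1)] unfolding W_def by metis
qed

lemma manifold_chart_transition_interior:
  assumes c: "manifold_chart_at T n q U V h" and c': "manifold_chart_at T n' q' U' V' h'"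
    and "n' \<le> n" "x \<in> U \<inter> U'" "0 < h x 0" "i < n" "\<And>y. y \<in> U' \<Longrightarrow> 0 \<le> h' y i"
  shows "0 < h' x i"
proof -
  have "openin T (U \<inter> U')"
    using assms(4) manifold_chart_atD(4)[OF c] manifold_chart_atD(4)[OF c'] by blast
  define A where "A = h ` (U \<inter> U') \<inter> {x. 0 < x 0}"
  have "openin (Euclidean_space n) (h' ` {y \<in> U \<inter> U'. h y \<in> A})"
    using c c' \<open>n' \<le> n\<close> openin_Euclidean_space_manifold_chart_interior[OF c \<open>openin T (U \<inter> U')\<close>]
    by (intro openin_Euclidean_space_chart_transition) (auto simp: A_def)
  moreover have "h' ` {y \<in> U \<inter> U'. h y \<in> A} \<subseteq> {y. 0 \<le> y i}"
    using assms(7) by auto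
  moreover have "h' x \<in> h' ` {y \<in> U \<inter> U'. h y \<in> A}"
    using assms(4,5) by (auto simp: A_def)
  ultimately show ?thesis
    using \<open>i < n\<close> by (rule openin_Euclidean_space_nonneg_coordinate)
qed

lemma manifold_chart_interior_point:
  assumes c: "manifold_chart_at T n q U V h" and "0 < n" "openin T W" "q \<in> W" "W \<subseteq> U"
  obtains x where "x \<in> W" "0 < h x 0"
proof -
  obtain B where B: "openin (Euclidean_space n) B" "h ` W = B \<inter> {x. 0 \<le> x 0}"
    using openin_half_space_manifold_chart_image[OF c assms(3,5)] by (auto simp: openin_half_space_iff)
  then obtain \<epsilon> where "\<epsilon> > 0" and \<epsilon>: "\<And>t. \<bar>t\<bar> < \<epsilon> \<Longrightarrow> (h q)(0 := h q 0 + t) \<in> B"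
    using openin_Euclidean_space_coordinate_perturbation[OF B(1) _ \<open>0 < n\<close>] \<open>q \<in> W\<close> by blast
  have "0 \<le> h q 0"
    using manifold_chart_atD(2)[OF c] assms(4,5) by (auto simp: topspace_half_space)
  with \<open>\<epsilon> > 0\<close> have "(h q)(0 := h q 0 + \<epsilon> / 2) \<in> h ` W"
    using \<epsilon>[of "\<epsilon> / 2"] B(2) by simp
  then obtain x where "(h q)(0 := h q 0 + \<epsilon> / 2) = h x" "x \<in> W"
    by (rule imageE)
  moreover from this(1) have "h x 0 = h q 0 + \<epsilon> / 2"
    by (metis fun_upd_same)
  ultimately show ?thesis
    using \<open>0 \<le> h q 0\<close> \<open>\<epsilon> > 0\<close> by (intro that[of x]) auto
qed

lemma manifold_chart_interior_not_boundary:
  assumes c: "manifold_chart_at T n q U V h" and "0 < h q 0"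
  shows "q \<notin> manifold_boundary T"
proof
  assume "q \<in> manifold_boundary T"
  then obtain n' U' V' h' where "0 < n'" and c': "manifold_chart_at T n' q U' V' h'" and "h' q 0 = 0"
    unfolding manifold_boundary_def by blast
  have "q \<in> U \<inter> U'" "openin T (U \<inter> U')"
    using c c' manifold_chart_atD(4)[OF c] manifold_chart_atD(4)[OF c']
    unfolding manifold_chart_at_def by auto
  have nonneg: "0 \<le> k y 0" "0 \<le> k y d" if "manifold_chart_at T d p W V'' k" "y \<in> W" for d p W V'' k y
    using manifold_chart_atD(2)[OF that] by (auto simp: topspace_half_space)
  show False
  proof (cases "n' \<le> n")
    case True
    have "0 < h' q 0"
      using \<open>0 < n'\<close> True nonneg(1)[OF c']
      by (intro manifold_chart_transition_interior[OF c c' True \<open>q \<in> U \<inter> U'\<close> \<open>0 < h q 0\<close>]) auto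
    with \<open>h' q 0 = 0\<close> show False
      by simp
  next
    case False
    obtain x where x: "x \<in> U' \<inter> U" "0 < h' x 0"
      using manifold_chart_interior_point[OF c' \<open>0 < n'\<close>, of "U' \<inter> U"] \<open>q \<in> U \<inter> U'\<close>
        \<open>openin T (U \<inter> U')\<close> by (auto simp: Int_commute)
    have "0 < h x n"
      using False nonneg(2)[OF c]
      by (intro manifold_chart_transition_interior[OF c' c _ x]) auto
    moreover have "h x n = 0"
      using manifold_chart_atD(2)[OF c] x by (auto simp: topspace_half_space)
    ultimately show False
      by simp
  qed
qed

lemma manifold_chart_at_dimension_0:
  assumes c: "manifold_chart_at T 0 q U V h"
  shows "U = {q}"
proof -
  have h: "homeomorphic_map (subtopology T U) (subtopology (half_space 0) V) h" and "q \<in> U"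
    using c unfolding manifold_chart_at_def by auto
  have "inj_on h U"
    using homeomorphic_imp_injective_map[OF h] manifold_chart_atD(3)[OF c \<open>q \<in> U\<close>]
    by (simp add: Int_absorb1)
  moreover have "h x = (\<lambda>i. 0)" if "x \<in> U" for x
    using manifold_chart_atD(2)[OF c that] by (auto simp: topspace_half_space)
  ultimately have "x = q" if "x \<in> U" for x
    using \<open>q \<in> U\<close> that by (simp add: inj_on_def)
  with \<open>q \<in> U\<close> show ?thesis
    by blast
qed

lemma openin_manifold_chart_interior:
  assumes c: "manifold_chart_at T n q U V h"
  shows "openin T {x \<in> U. 0 < h x 0}"
proof -
  have "continuous_map (subtopology T U) euclideanreal (\<lambda>x. h x 0)"
    using continuous_map_compose[OF continuous_map_manifold_chart[OF c]
        continuous_map_Euclidean_space_coordinate] by (simp add: o_def)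
  then have "openin (subtopology T U) {x \<in> topspace (subtopology T U). h x 0 \<in> {0<..}}"
    by (rule openin_continuous_map_preimage) simp
  moreover have "openin T U"
    using c unfolding manifold_chart_at_def by blast
  moreover have "{x \<in> topspace (subtopology T U). h x 0 \<in> {0<..}} = {x \<in> U. 0 < h x 0}"
    using openin_subset[OF \<open>openin T U\<close>] by auto
  ultimately show ?thesis
    using openin_trans_full by metis
qed

lemma closedin_manifold_boundary:
  assumes "is_manifold T"
  shows "closedin T (manifold_boundary T)"
proof -
  obtain n where charts: "\<forall>x\<in>topspace T. \<exists>U V h. manifold_chart_at T n x U V h"
    using assms unfolding is_manifold_def by blast
  have "\<exists>W. openin T W \<and> p \<in> W \<and> W \<subseteq> topspace T - manifold_boundary T"
    if p: "p \<in> topspace T - manifold_boundary T" for p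
  proof -
    obtain U V h where c: "manifold_chart_at T n p U V h"
      using charts p by blast
    then have "p \<in> U" "openin T U"
      unfolding manifold_chart_at_def by auto
    show ?thesis
    proof (cases "n = 0")
      case True
      with c have "U = {p}"
        using manifold_chart_at_dimension_0[of T p U V h] by simp
      with p \<open>openin T U\<close> show ?thesis
        by auto
    next
      case False
      then have "0 < h p 0"
        using c p manifold_chart_atD(2)[OF c \<open>p \<in> U\<close>]
        unfolding manifold_boundary_def by (force simp: topspace_half_space)
      moreover have "x \<notin> manifold_boundary T" if "x \<in> U" "0 < h x 0" for x
        using c that by (intro manifold_chart_interior_not_boundary) (auto simp: manifold_chart_at_def)
      ultimately show ?thesis
        using openin_manifold_chart_interior[OF c] \<open>p \<in> U\<close> manifold_chart_atD(3)[OF c \<open>p \<in> U\<close>]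
        by (intro exI[of _ "{x \<in> U. 0 < h x 0}"]) auto
    qed
  qed
  then have "openin T (topspace T - manifold_boundary T)"
    by (subst openin_subopen) blast
  then show ?thesis
    by (simp add: closedin_def manifold_boundary_def)
qed

lemma homeomorphic_map_manifold_chart_at:
  assumes f: "homeomorphic_maps T T f f'" and c: "manifold_chart_at T n p U V h"
  shows "manifold_chart_at T n (f p) (f ` U) V (h \<circ> f')"
proof -
  have "p \<in> U" and U: "openin T U" and h: "homeomorphic_map (subtopology T U) (subtopology (half_space n) V) h"
    using c unfolding manifold_chart_at_def by auto
  have f_hom: "homeomorphic_map T T f" and f'_hom: "homeomorphic_map T T f'"
    using f homeomorphic_map_maps homeomorphic_maps_sym by blast+
  have f'f: "\<And>x. x \<in> topspace T \<Longrightarrow> f' (f x) = x \<and> f x \<in> topspace T"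
    using f unfolding homeomorphic_maps_def continuous_map_def by auto
  have "f' ` (topspace T \<inter> f ` U) = topspace T \<inter> U"
  proof
    show "f' ` (topspace T \<inter> f ` U) \<subseteq> topspace T \<inter> U"
      using f'f openin_subset[OF U] by auto
    show "topspace T \<inter> U \<subseteq> f' ` (topspace T \<inter> f ` U)"
    proof
      fix x
      assume "x \<in> topspace T \<inter> U"
      with f'f show "x \<in> f' ` (topspace T \<inter> f ` U)"
        by (auto intro!: image_eqI[of x f' "f x"])
    qed
  qed
  then have "homeomorphic_map (subtopology T (f ` U)) (subtopology T U) f'"
    by (rule homeomorphic_map_subtopologies[OF f'_hom])
  then have "homeomorphic_map (subtopology T (f ` U)) (subtopology (half_space n) V) (h \<circ> f')"
    using h by (rule homeomorphic_map_compose)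
  moreover have "openin T (f ` U)"
    using homeomorphic_map_openness[OF f_hom] U openin_subset by blast
  ultimately show ?thesis
    using c \<open>p \<in> U\<close> unfolding manifold_chart_at_def by auto
qed

lemma homeomorphic_map_manifold_boundary:
  assumes f: "homeomorphic_map T T f" and p: "p \<in> manifold_boundary T"
  shows "f p \<in> manifold_boundary T"
proof -
  obtain n U V h where "0 < n" and c: "manifold_chart_at T n p U V h" and "h p 0 = 0" "p \<in> topspace T"
    using p unfolding manifold_boundary_def by blast
  obtain f' where ff': "homeomorphic_maps T T f f'"
    using f homeomorphic_map_maps by blast
  then have "f' (f p) = p" "f p \<in> topspace T"
    using \<open>p \<in> topspace T\<close> unfolding homeomorphic_maps_def continuous_map_def by auto
  with homeomorphic_map_manifold_chart_at[OF ff' c] \<open>0 < n\<close> \<open>h p 0 = 0\<close> show ?thesis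
    unfolding manifold_boundary_def by fastforce
qed

section \<open>The compactified cylinder\<close>

locale EZ_manifold =
  fixes X :: "'a topology" and Z :: "'a set" and \<phi> :: "'g::group_add \<Rightarrow> 'a \<Rightarrow> 'a"
    and m :: "'a metric"
  assumes EZ: "EZ_structure_via \<phi> X Z"
    and manifold: "is_manifold (subtopology X (topspace X - Z))"
    and mtopology: "mtopology_of m = X"
    and push_off: "\<And>\<epsilon>. \<epsilon> > 0 \<Longrightarrow>
      \<exists>f. continuous_map X X f \<and> (\<forall>x\<in>topspace X. f x \<notin> Z \<and> mdist m (f x) x < \<epsilon>)"
begin

text \<open>\<open>N\<close>, \<open>bdN\<close>, \<open>C\<close> and \<open>Y\<close> are the point sets of \<open>N\<close>, \<open>\<partial>N\<close>, \<open>\<N>\<close> and \<open>\<N> \<union> Z\<close>; the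
  names of the corresponding topologies carry the prefix \<open>top\<close>.\<close>

definition "N = topspace X - Z"
definition "topN = subtopology X N"
definition "bdN = manifold_boundary topN"
definition "topC = mapping_cyl topN"
definition "C = topspace topC"
abbreviation "topCinf \<equiv> one_point_compactification topC"
definition "topP = prod_topology topCinf X"
definition "Y = compactified_carrier X Z"
definition "topY = compactified_space X Z"

lemma EZ_unfolded:
  "compact_space X" "Z_set X Z" "top_action \<phi> topN" "fixed_point_free_action \<phi> topN"
  "properly_discontinuous_action \<phi> topN" "cocompact_action \<phi> topN" "null_translates \<phi> X Z"
  "top_action \<phi> X"
  using EZ unfolding EZ_structure_via_def Z_structure_via_def euclidean_retract_def topN_def N_def
  by auto

lemma Hausdorff_X: "Hausdorff_space X"
  using mtopology Metric_space.Hausdorff_space_mtopology[OF Metric_space_mspace_mdist]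
  unfolding mtopology_of_def by metis

lemma mspace_m: "mspace m = topspace X"
  using mtopology topspace_mtopology_of by metis

lemma openin_mball_m: "openin X (mball_of m x r)"
  using mtopology Metric_space.openin_mball[OF Metric_space_mspace_mdist]
  unfolding mtopology_of_def mball_of_def by metis

lemma closedin_Z: "closedin X Z"
  using EZ_unfolded(2) unfolding Z_set_def by blast

lemma Z_subset: "Z \<subseteq> topspace X"
  using closedin_Z closedin_subset by blast

lemma N_subset: "N \<subseteq> topspace X"
  unfolding N_def by blast

lemma topspace_topN: "topspace topN = N"
  unfolding topN_def using N_subset by auto

lemma openin_N: "openin X N"
  unfolding N_def using closedin_Z by (simp add: openin_diff)

lemma topspace_X_split: "topspace X = N \<union> Z" "N \<inter> Z = {}"
  using Z_subset unfolding N_def by auto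

lemma N_dense:
  assumes "openin X W" "z \<in> W"
  obtains p where "p \<in> N" "p \<in> W"
proof -
  have z: "z \<in> mspace m"
    using assms openin_subset mspace_m by blast
  obtain r where "r > 0" and r: "mball_of m z r \<subseteq> W"
    using assms mtopology unfolding mtopology_of_def mball_of_def
    by (metis Metric_space.openin_mtopology Metric_space_mspace_mdist)
  obtain f where f: "continuous_map X X f" "\<forall>x\<in>topspace X. f x \<notin> Z \<and> mdist m (f x) x < r"
    using push_off \<open>r > 0\<close> by blast
  then have "f z \<in> topspace X" "f z \<notin> Z" "f z \<in> mball_of m z r"
    using z mspace_m by (auto simp: continuous_map_def mdist_commute)
  with r show ?thesis
    by (intro that[of "f z"]) (auto simp: N_def)
qed

lemma homeomorphic_map_act: "homeomorphic_map X X (\<phi> g)"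
  using EZ_unfolded(8) unfolding top_action_def by blast

lemma homeomorphic_map_act_topN: "homeomorphic_map topN topN (\<phi> g)"
  using EZ_unfolded(3) unfolding top_action_def by blast

lemma continuous_map_act: "continuous_map X X (\<phi> g)"
  using homeomorphic_map_act homeomorphic_imp_continuous_map by blast

lemma act_zero: "x \<in> topspace X \<Longrightarrow> \<phi> 0 x = x"
  using EZ_unfolded(8) unfolding top_action_def by blast

lemma act_add: "x \<in> topspace X \<Longrightarrow> \<phi> (g + h) x = \<phi> g (\<phi> h x)"
  using EZ_unfolded(8) unfolding top_action_def by blast

lemma act_minus: "x \<in> topspace X \<Longrightarrow> \<phi> (- g) (\<phi> g x) = x"
  using act_add[of x "-g" g] act_zero by simp

lemma act_in_X: "x \<in> topspace X \<Longrightarrow> \<phi> g x \<in> topspace X"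
  using homeomorphic_imp_surjective_map[OF homeomorphic_map_act] by blast

lemma act_in_N: "x \<in> N \<Longrightarrow> \<phi> g x \<in> N"
  using homeomorphic_imp_surjective_map[OF homeomorphic_map_act_topN] topspace_topN by blast

lemma act_in_Z: "x \<in> Z \<Longrightarrow> \<phi> g x \<in> Z"
proof (rule ccontr)
  assume "x \<in> Z" "\<phi> g x \<notin> Z"
  then have "\<phi> g x \<in> N"
    using act_in_X Z_subset by (auto simp: N_def)
  then have "\<phi> (- g) (\<phi> g x) \<in> N"
    by (rule act_in_N)
  with \<open>x \<in> Z\<close> show False
    using act_minus Z_subset topspace_X_split by auto
qed

lemma bdN_subset: "bdN \<subseteq> N"
  unfolding bdN_def manifold_boundary_def using topspace_topN by auto

lemma act_in_bdN_iff: "p \<in> N \<Longrightarrow> \<phi> g p \<in> bdN \<longleftrightarrow> p \<in> bdN"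
  using homeomorphic_map_manifold_boundary[OF homeomorphic_map_act_topN] act_minus[of p g] N_subset
  unfolding bdN_def by (metis subsetD)

lemma closedin_Z_bdN: "closedin X (Z \<union> bdN)"
proof -
  obtain B where B: "closedin X B" "bdN = B \<inter> N"
    using closedin_manifold_boundary[OF manifold]
    unfolding bdN_def topN_def N_def closedin_subtopology by blast
  then have "Z \<union> bdN = Z \<union> B"
    using closedin_subset[OF B(1)] topspace_X_split by auto
  then show ?thesis
    using closedin_Z B(1) by (simp add: closedin_Un)
qed

definition "height = capped_setdist m (Z \<union> bdN)"

lemma continuous_map_height: "continuous_map X euclideanreal height"
  unfolding height_def using continuous_map_capped_setdist closedin_Z_bdN closedin_subset mtopology mspace_m
  by metis

lemma height_bounds: "0 \<le> height p" "height p \<le> 1"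
  unfolding height_def by (rule capped_setdist_bounds)+

lemma height_Lipschitz:
  "p \<in> topspace X \<Longrightarrow> q \<in> topspace X \<Longrightarrow> \<bar>height p - height q\<bar> \<le> mdist m p q"
  unfolding height_def using capped_setdist_Lipschitz closedin_Z_bdN closedin_subset mspace_m by metis

lemma height_eq_0_iff: "p \<in> topspace X \<Longrightarrow> height p = 0 \<longleftrightarrow> p \<in> Z \<or> p \<in> bdN"
  unfolding height_def using capped_setdist_eq_0_iff[of m "Z \<union> bdN" p] closedin_Z_bdN mtopology mspace_m
  by simp

lemma height_Z: "p \<in> Z \<Longrightarrow> height p = 0"
  using height_eq_0_iff Z_subset by blast

lemma height_bdN: "p \<in> bdN \<Longrightarrow> height p = 0"
  using height_eq_0_iff bdN_subset N_subset by blast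

abbreviation "topI \<equiv> top_of_set {0..1::real}"
abbreviation "collapse \<equiv> collapse_map topN"

lemma topC_eq: "topC = quotient_top (prod_topology topN topI) collapse"
  unfolding topC_def mapping_cyl_def by simp

lemma collapse_eq: "collapse (p, t) = (p, if p \<in> bdN then 0 else t)"
  unfolding collapse_map_def bdN_def by simp

lemma C_eq: "C = collapse ` (N \<times> {0..1})"
  unfolding C_def topC_eq topspace_quotient_top by (simp add: topspace_topN)

lemma mem_C: "c \<in> C \<longleftrightarrow> fst c \<in> N \<and> 0 \<le> snd c \<and> snd c \<le> 1 \<and> (fst c \<in> bdN \<longrightarrow> snd c = 0)"
proof
  assume "c \<in> C"
  then show "fst c \<in> N \<and> 0 \<le> snd c \<and> snd c \<le> 1 \<and> (fst c \<in> bdN \<longrightarrow> snd c = 0)"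
    unfolding C_eq by (auto simp: collapse_eq)
next
  assume c: "fst c \<in> N \<and> 0 \<le> snd c \<and> snd c \<le> 1 \<and> (fst c \<in> bdN \<longrightarrow> snd c = 0)"
  then have "collapse (fst c, snd c) = c"
    by (cases c) (auto simp: collapse_eq)
  with c show "c \<in> C"
    unfolding C_eq by (metis atLeastAtMost_iff image_eqI mem_Times_iff prod.collapse)
qed

lemma continuous_map_from_topC:
  assumes "continuous_map (prod_topology topN topI) W g"
    and "\<And>p t. p \<in> N \<Longrightarrow> t \<in> {0..1} \<Longrightarrow> g (p, t) = k (collapse (p, t))"
  shows "continuous_map topC W k"
  unfolding topC_eq
proof (rule continuous_map_from_quotient_top)
  show "continuous_map (prod_topology topN topI) W (k \<circ> collapse)"
    using assms(1) by (rule continuous_map_eq) (auto simp: assms(2) topspace_topN)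
qed

lemma continuous_map_fst_topC: "continuous_map topC topN fst"
  by (rule continuous_map_from_topC[OF continuous_map_fst]) (simp add: collapse_eq)

lemma continuous_map_fst_topC_X: "continuous_map topC X fst"
  using continuous_map_fst_topC unfolding topN_def continuous_map_in_subtopology by blast

lemma continuous_map_scaled:
  assumes \<mu>: "continuous_map X euclideanreal \<mu>" and "\<And>p. p \<in> bdN \<Longrightarrow> \<mu> p = 0"
  shows "continuous_map topC euclideanreal (\<lambda>c. snd c * \<mu> (fst c))"
proof (rule continuous_map_from_topC)
  have "continuous_map (prod_topology topN topI) X fst"
    using continuous_map_fst[of topN topI] unfolding topN_def continuous_map_in_subtopology by blast
  then have "continuous_map (prod_topology topN topI) euclideanreal (\<mu> \<circ> fst)"
    using \<mu> by (rule continuous_map_compose)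
  moreover have "continuous_map (prod_topology topN topI) euclideanreal snd"
    using continuous_map_snd[of topN topI] continuous_map_in_subtopology by blast
  ultimately show "continuous_map (prod_topology topN topI) euclideanreal (\<lambda>x. snd x * \<mu> (fst x))"
    by (auto intro: continuous_map_real_mult simp: o_def)
qed (auto simp: collapse_eq assms(2))

lemma cylinder_over_eq:
  assumes "K \<subseteq> N"
  shows "collapse ` (K \<times> {0..1}) = {c \<in> C. fst c \<in> K}"
proof
  show "collapse ` (K \<times> {0..1}) \<subseteq> {c \<in> C. fst c \<in> K}"
    using assms by (auto simp: C_eq collapse_eq)
  show "{c \<in> C. fst c \<in> K} \<subseteq> collapse ` (K \<times> {0..1})"
  proof
    fix c
    assume c: "c \<in> {c \<in> C. fst c \<in> K}"
    then have "collapse (fst c, snd c) = c"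
      by (cases c) (auto simp: mem_C collapse_eq)
    moreover have "(fst c, snd c) \<in> K \<times> {0..1}"
      using c by (simp add: mem_C mem_Times_iff)
    ultimately show "c \<in> collapse ` (K \<times> {0..1})"
      by (metis image_eqI)
  qed
qed

lemma closedin_cylinder_over:
  assumes "closedin topN K"
  shows "closedin topC {c \<in> C. fst c \<in> K}"
  unfolding topC_eq
proof (rule closedin_quotient_top)
  show "{c \<in> C. fst c \<in> K} \<subseteq> collapse ` topspace (prod_topology topN topI)"
    by (auto simp: topspace_topN C_eq)
  have "{x \<in> topspace (prod_topology topN topI). collapse x \<in> {c \<in> C. fst c \<in> K}}
        = {x \<in> topspace (prod_topology topN topI). fst x \<in> K}"
    using closedin_subset[OF assms] by (auto simp: collapse_eq mem_C topspace_topN)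
  then show "closedin (prod_topology topN topI) {x \<in> topspace (prod_topology topN topI). collapse x \<in> {c \<in> C. fst c \<in> K}}"
    using closedin_continuous_map_preimage[OF continuous_map_fst[of topN topI] assms] by simp
qed

lemma compactin_cylinder_over:
  assumes "compactin topN K"
  shows "compactin topC {c \<in> C. fst c \<in> K}"
proof -
  have "compactin (prod_topology topN topI) (K \<times> {0..1})"
    using assms by (simp add: compactin_Times compactin_subtopology compactin_euclidean_iff)
  then have "compactin topC (collapse ` (K \<times> {0..1}))"
    using continuous_map_quotient_top topC_eq image_compactin by metis
  then show ?thesis
    using cylinder_over_eq compactin_subset_topspace[OF assms] topspace_topN by simp
qed

lemma topspace_topCinf: "topspace topCinf = insert None (Some ` C)"
  unfolding C_def by (rule topspace_one_point_compactification)

lemma topspace_topP: "topspace topP = insert None (Some ` C) \<times> topspace X"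
  unfolding topP_def by (simp add: topspace_topCinf)

abbreviation "G \<equiv> graph_embedding"

lemma G_eq: "G c = (Some c, fst c)"
  unfolding graph_embedding_def by simp

lemma Y_eq_closure: "Y = topP closure_of (G ` C)"
  unfolding Y_def compactified_carrier_def topP_def topC_def C_def topN_def N_def by simp

lemma topY_eq: "topY = subtopology topP Y"
  unfolding topY_def compactified_space_def Y_def topP_def topC_def topN_def N_def by simp

lemma G_C_subset: "G ` C \<subseteq> topspace topP"
  using mem_C N_subset by (auto simp: topspace_topP G_eq)

lemma mem_Y:
  "y \<in> Y \<longleftrightarrow> y \<in> topspace topP \<and> (\<forall>T. y \<in> T \<and> openin topP T \<longrightarrow> (\<exists>c\<in>C. G c \<in> T))"
  unfolding Y_eq_closure in_closure_of by blast

lemma mem_Y_Some: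
  assumes "(Some c, p) \<in> Y"
  shows "p = fst c"
proof (rule ccontr)
  assume "p \<noteq> fst c"
  have "c \<in> C" "p \<in> topspace X"
    using assms by (auto simp: mem_Y topspace_topP)
  then have "fst c \<in> topspace X"
    using mem_C N_subset by auto
  with \<open>p \<in> topspace X\<close> \<open>p \<noteq> fst c\<close> obtain V W where VW: "openin X V" "openin X W"
      "fst c \<in> V" "p \<in> W" "disjnt V W"
    using Hausdorff_X unfolding Hausdorff_space_def by metis
  define T where "T = Some ` {c' \<in> topspace topC. fst c' \<in> V} \<times> W"
  have "openin topCinf (Some ` {c' \<in> topspace topC. fst c' \<in> V})"
    using openin_continuous_map_preimage[OF continuous_map_fst_topC_X VW(1)]
    by (rule openin_one_point_compactification_image_Some)
  then have "openin topP T"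
    unfolding T_def topP_def using VW(2) by (simp add: openin_prod_Times_iff)
  moreover have "(Some c, p) \<in> T"
    using \<open>c \<in> C\<close> VW unfolding T_def C_def by blast
  ultimately obtain c' where "G c' \<in> T"
    using assms by (auto simp: mem_Y)
  with VW(5) show False
    by (auto simp: T_def G_eq disjnt_def)
qed

text \<open>Near \<open>p \<in> N\<close> the point at infinity is separated from the graph by the complement of the
  cylinder over a compact neighbourhood of \<open>p\<close>.\<close>

lemma mem_Y_None:
  assumes "(None, p) \<in> Y"
  shows "p \<in> Z"
proof (rule ccontr)
  assume "p \<notin> Z"
  moreover have "p \<in> topspace X"
    using assms by (auto simp: mem_Y topspace_topP)
  ultimately have "p \<in> topspace topN"
    by (simp add: topspace_topN N_def)
  moreover have "locally_compact_space topN"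
    unfolding topN_def using Hausdorff_X compact_imp_locally_compact_space[OF EZ_unfolded(1)] openin_N
    by (blast intro: locally_compact_space_open_subset)
  ultimately obtain V K where VK: "openin topN V" "compactin topN K" "p \<in> V" "V \<subseteq> K"
    unfolding locally_compact_space_def by blast
  define T where "T = insert None (Some ` (C - {c \<in> C. fst c \<in> K})) \<times> V"
  have "closedin topC {c \<in> C. fst c \<in> K}"
    using VK(2) Hausdorff_X by (intro closedin_cylinder_over compactin_imp_closedin)
      (auto simp: topN_def Hausdorff_space_subtopology)
  moreover have "{c. Some c \<in> insert None (Some ` (C - {c \<in> C. fst c \<in> K}))} = C - {c \<in> C. fst c \<in> K}"
    and "C - (C - {c \<in> C. fst c \<in> K}) = {c \<in> C. fst c \<in> K}"
    by auto
  ultimately have "openin topCinf (insert None (Some ` (C - {c \<in> C. fst c \<in> K})))"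
    using compactin_cylinder_over[OF VK(2)]
    by (auto simp: openin_one_point_compactification C_def openin_diff)
  moreover have "openin X V"
    using VK(1) openin_N openin_trans_full unfolding topN_def by blast
  ultimately have "openin topP T"
    unfolding T_def topP_def by (simp add: openin_prod_Times_iff)
  moreover have "(None, p) \<in> T"
    using VK(3) by (simp add: T_def)
  ultimately obtain c where "c \<in> C" "G c \<in> T"
    using assms by (auto simp: mem_Y)
  with VK(4) show False
    by (auto simp: T_def G_eq)
qed

lemma None_Z_in_Y:
  assumes "z \<in> Z"
  shows "(None, z) \<in> Y"
  unfolding mem_Y
proof (intro conjI allI impI)
  show "(None, z) \<in> topspace topP"
    using assms Z_subset by (auto simp: topspace_topP)
  fix T
  assume T: "(None, z) \<in> T \<and> openin topP T"
  then obtain U W where UW: "openin topCinf U" "openin X W" "None \<in> U" "z \<in> W" "U \<times> W \<subseteq> T"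
    unfolding topP_def openin_prod_topology_alt by blast
  define K where "K = C - {c. Some c \<in> U}"
  have "compactin topC K"
    using UW unfolding K_def openin_one_point_compactification C_def by blast
  then have "compactin topN (fst ` K)"
    using continuous_map_fst_topC by (rule image_compactin)
  then have "closedin X (fst ` K)" and "fst ` K \<subseteq> N"
    using compactin_imp_closedin[OF Hausdorff_X] unfolding topN_def compactin_subtopology by auto
  then have "openin X (W - fst ` K)" "z \<in> W - fst ` K"
    using UW assms topspace_X_split by (auto simp: openin_diff)
  then obtain p where p: "p \<in> N" "p \<in> W - fst ` K"
    by (rule N_dense)
  then have "(p, 0) \<in> C" "(p, 0) \<notin> K"
    by (auto simp: mem_C image_iff)
  with UW p show "\<exists>c\<in>C. G c \<in> T"
    by (intro bexI[of _ "(p, 0)"]) (auto simp: G_eq K_def)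
qed

lemma Y_eq: "Y = G ` C \<union> ({None} \<times> Z)"
proof
  show "Y \<subseteq> G ` C \<union> ({None} \<times> Z)"
  proof
    fix y
    assume y: "y \<in> Y"
    show "y \<in> G ` C \<union> ({None} \<times> Z)"
    proof (cases y)
      case (Pair a p)
      with y have "a \<in> insert None (Some ` C)"
        by (auto simp: mem_Y topspace_topP)
      with y Pair mem_Y_Some mem_Y_None show ?thesis
        by (auto simp: G_eq image_iff)
    qed
  qed
  show "G ` C \<union> ({None} \<times> Z) \<subseteq> Y"
    using closure_of_subset[OF G_C_subset] None_Z_in_Y by (auto simp: Y_eq_closure)
qed

lemma Y_minus_graph: "Y - G ` C = {None} \<times> Z"
  using Y_eq by (auto simp: G_eq)

section \<open>\<open>\<N> \<union> Z\<close> as the region under the graph of the height\<close>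

lemma topspace_topY: "topspace topY = Y"
  unfolding topY_eq using Y_eq G_C_subset Z_subset by (auto simp: topspace_topP)

lemma openin_topY_graph: "openin topY (G ` C)"
proof -
  have "openin topCinf (Some ` C)"
    unfolding C_def by (rule openin_one_point_compactification_image_Some) simp
  then have "openin topP (Some ` C \<times> topspace X)"
    unfolding topP_def by (simp add: openin_prod_Times_iff)
  then have "openin topY (Y \<inter> (Some ` C \<times> topspace X))"
    unfolding topY_eq by (rule openin_subtopology_Int2)
  moreover have "Y \<inter> (Some ` C \<times> topspace X) = G ` C"
    using Y_eq G_C_subset by (auto simp: topspace_topP G_eq)
  ultimately show ?thesis
    by simp
qed

lemma continuous_map_graph_inverse: "continuous_map (subtopology topY (G ` C)) topC (\<lambda>y. the (fst y))"
proof -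
  have "continuous_map (subtopology topY (G ` C)) topCinf fst"
    unfolding topY_eq topP_def subtopology_subtopology by (rule continuous_map_subtopology_fst)
  then have "continuous_map (subtopology topY (G ` C)) (subtopology topCinf (Some ` C)) fst"
    by (auto simp: continuous_map_in_subtopology G_eq)
  then show ?thesis
    using continuous_map_compose continuous_map_the_one_point_compactification[of topC]
    unfolding C_def o_def by fastforce
qed

lemma continuous_map_snd_topY: "continuous_map topY X snd"
  unfolding topY_eq topP_def by (rule continuous_map_subtopology_snd)

definition scaled_height :: "('a \<Rightarrow> real) \<Rightarrow> ('a \<times> real) option \<times> 'a \<Rightarrow> real" where
  "scaled_height \<mu> y = (case fst y of None \<Rightarrow> 0 | Some c \<Rightarrow> snd c * \<mu> (fst c))"

lemma scaled_height_Some [simp]: "scaled_height \<mu> (Some c, p) = snd c * \<mu> (fst c)"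
  by (simp add: scaled_height_def)

lemma scaled_height_None [simp]: "scaled_height \<mu> (None, z) = 0"
  by (simp add: scaled_height_def)

lemma scaled_height_bounds:
  assumes "y \<in> Y" "\<And>p. p \<in> topspace X \<Longrightarrow> 0 \<le> \<mu> p"
  shows "0 \<le> scaled_height \<mu> y" "scaled_height \<mu> y \<le> \<mu> (snd y)"
  using assms Y_eq Z_subset mem_C N_subset by (auto simp: G_eq mult_left_le_one_le)

lemma continuous_map_scaled_height:
  assumes \<mu>: "continuous_map X euclideanreal \<mu>" and "\<And>p. p \<in> topspace X \<Longrightarrow> 0 \<le> \<mu> p"
    and "\<And>p. p \<in> Z \<Longrightarrow> \<mu> p = 0" and "\<And>p. p \<in> bdN \<Longrightarrow> \<mu> p = 0"
  shows "continuous_map topY euclideanreal (scaled_height \<mu>)"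
proof (rule continuous_map_real_dominated[OF openin_topY_graph])
  have "continuous_map (subtopology topY (G ` C)) euclideanreal
      ((\<lambda>c. snd c * \<mu> (fst c)) \<circ> (\<lambda>y. the (fst y)))"
    using continuous_map_graph_inverse continuous_map_scaled[OF \<mu> assms(4)]
    by (rule continuous_map_compose)
  then show "continuous_map (subtopology topY (G ` C)) euclideanreal (scaled_height \<mu>)"
    by (rule continuous_map_eq) (auto simp: G_eq)
  show "continuous_map topY euclideanreal (\<mu> \<circ> snd)"
    using continuous_map_snd_topY \<mu> by (rule continuous_map_compose)
  show "\<bar>scaled_height \<mu> y\<bar> \<le> (\<mu> \<circ> snd) y" if "y \<in> topspace topY" for y
    using scaled_height_bounds[of y \<mu>] assms(2) that topspace_topY by simp
  show "(\<mu> \<circ> snd) y = 0" if "y \<in> topspace topY - G ` C" for y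
    using that Y_eq assms(3) topspace_topY by auto
qed

definition "R = {x. fst x \<in> topspace X \<and> 0 \<le> snd x \<and> snd x \<le> height (fst x)}"
definition "topR = subtopology (prod_topology X euclideanreal) R"
definition "to_region y = (snd y, scaled_height height y)"

text \<open>Over \<open>\<partial>N\<close>, where the segment is collapsed, the height vanishes and \<open>t = 0\<close> is the
  representative.\<close>

definition "of_region x = (if fst x \<in> Z then (None, fst x)
     else (Some (fst x, if height (fst x) = 0 then 0 else snd x / height (fst x)), fst x))"

lemma topspace_topR: "topspace topR = R"
  unfolding topR_def R_def by auto

lemma to_region_in_R: "y \<in> Y \<Longrightarrow> to_region y \<in> R"
  using scaled_height_bounds[of y height] height_bounds Y_eq Z_subset mem_C N_subset
  by (auto simp: R_def to_region_def G_eq)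

lemma of_region_to_region: "y \<in> Y \<Longrightarrow> of_region (to_region y) = y"
  using Y_eq topspace_X_split height_eq_0_iff N_subset
  by (auto simp: to_region_def of_region_def G_eq mem_C)

lemma to_region_of_region: "x \<in> R \<Longrightarrow> of_region x \<in> Y \<and> to_region (of_region x) = x"
proof (cases x)
  case (Pair p r)
  assume "x \<in> R"
  then have p: "p \<in> topspace X" and r: "0 \<le> r" "r \<le> height p"
    using Pair by (auto simp: R_def)
  consider "p \<in> Z" | "p \<in> N" "height p = 0" | "p \<in> N" "height p \<noteq> 0"
    using p topspace_X_split by blast
  then show ?thesis
  proof cases
    case 1
    then show ?thesis
      using Pair r height_Z[of p] Y_eq by (auto simp: of_region_def to_region_def)
  next
    case 2
    then have "p \<in> bdN" "p \<notin> Z" "r = 0"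
      using height_eq_0_iff[OF p] r topspace_X_split by auto
    then have "(p, 0) \<in> C" "of_region x = G (p, 0)"
      using 2 Pair by (auto simp: mem_C of_region_def G_eq)
    then show ?thesis
      using Pair 2 Y_eq \<open>r = 0\<close> by (auto simp: to_region_def G_eq)
  next
    case 3
    then have "0 < height p" "p \<notin> bdN" "p \<notin> Z"
      using height_bounds[of p] height_bdN topspace_X_split by (auto simp: less_le)
    then have "(p, r / height p) \<in> C" "of_region x = G (p, r / height p)"
      using 3 Pair r by (auto simp: mem_C of_region_def G_eq)
    then show ?thesis
      using Pair \<open>0 < height p\<close> Y_eq by (auto simp: to_region_def G_eq)
  qed
qed

lemma compact_space_topY: "compact_space topY"
proof -
  have "compact_space topP"
    unfolding topP_def
    using compact_space_one_point_compactification EZ_unfolded(1) compact_space_prod_topology by blast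
  then have "compactin topP Y"
    by (simp add: Y_eq_closure closedin_compact_space)
  then show ?thesis
    unfolding topY_eq by (rule compact_space_subtopology)
qed

lemma continuous_map_to_region: "continuous_map topY topR to_region"
proof -
  have "continuous_map topY euclideanreal (scaled_height height)"
    using continuous_map_height height_bounds(1) height_Z height_bdN
    by (rule continuous_map_scaled_height)
  then have "continuous_map topY (prod_topology X euclideanreal) to_region"
    using continuous_map_snd_topY by (simp add: continuous_map_pairwise to_region_def o_def)
  then show ?thesis
    using to_region_in_R topspace_topY unfolding topR_def by (simp add: continuous_map_in_subtopology)
qed

text \<open>A continuous bijection from a compact space onto a Hausdorff space.\<close>

lemma homeomorphic_maps_to_region: "homeomorphic_maps topY topR to_region of_region"
proof -
  have "Hausdorff_space topR"
    unfolding topR_def using Hausdorff_X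
    by (simp add: Hausdorff_space_prod_topology Hausdorff_space_subtopology)
  moreover have "to_region ` topspace topY = topspace topR"
    unfolding topspace_topY topspace_topR using to_region_in_R to_region_of_region
    by (auto intro!: image_eqI[where x="of_region _"])
  moreover have "inj_on to_region (topspace topY)"
    unfolding topspace_topY using of_region_to_region by (rule inj_on_inverseI)
  ultimately have "homeomorphic_map topY topR to_region"
    using continuous_imp_homeomorphic_map continuous_map_to_region compact_space_topY by blast
  then obtain g where g: "homeomorphic_maps topY topR to_region g"
    using homeomorphic_map_maps by blast
  then have "g x = of_region x" if "x \<in> topspace topR" for x
    using that of_region_to_region topspace_topY
    unfolding homeomorphic_maps_def continuous_map_def by (metis PiE)
  then show ?thesis
    by (intro homeomorphic_maps_eq[OF g]) simp_all
qed

lemma continuous_map_of_region: "continuous_map topR topY of_region"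
  using homeomorphic_maps_to_region unfolding homeomorphic_maps_def by blast

lemma continuous_map_into_topY:
  assumes f: "continuous_map T (prod_topology X euclideanreal) (\<lambda>x. to_region (f x))"
    and f_Y: "\<And>x. x \<in> topspace T \<Longrightarrow> f x \<in> Y"
  shows "continuous_map T topY f"
proof -
  have "continuous_map T topR (\<lambda>x. to_region (f x))"
    using f f_Y to_region_in_R unfolding topR_def by (simp add: continuous_map_in_subtopology)
  then have "continuous_map T topY (of_region \<circ> (\<lambda>x. to_region (f x)))"
    using continuous_map_of_region by (rule continuous_map_compose)
  then show ?thesis
    by (rule continuous_map_eq) (simp add: of_region_to_region f_Y)
qed

definition "metric_Y = metric (Y, \<lambda>a b. prod_dist (mdist m) dist (to_region a) (to_region b))"

lemma metric_Y:
  "mtopology_of metric_Y = topY" "mspace metric_Y = Y"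
  "mdist metric_Y = (\<lambda>a b. prod_dist (mdist m) dist (to_region a) (to_region b))"
proof -
  have "mtopology_of (submetric (prod_metric m euclidean_metric) R) = topR"
    unfolding topR_def by (simp add: mtopology_of_submetric mtopology)
  then have "homeomorphic_map topY (mtopology_of (submetric (prod_metric m euclidean_metric) R)) to_region"
    using homeomorphic_maps_to_region homeomorphic_map_maps by metis
  from homeomorphic_map_pullback_metric[OF this]
  show "mtopology_of metric_Y = topY" "mspace metric_Y = Y"
    "mdist metric_Y = (\<lambda>a b. prod_dist (mdist m) dist (to_region a) (to_region b))"
    unfolding metric_Y_def by (simp_all add: topspace_topY)
qed

lemma mdist_metric_Y_le:
  "mdist metric_Y y y' \<le> mdist m (snd y) (snd y') + \<bar>scaled_height height y - scaled_height height y'\<bar>"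
proof -
  have "sqrt ((mdist m (snd y) (snd y'))\<^sup>2 + \<bar>scaled_height height y - scaled_height height y'\<bar>\<^sup>2)
      \<le> mdist m (snd y) (snd y') + \<bar>scaled_height height y - scaled_height height y'\<bar>"
    by (rule sqrt_sum_squares_le_sum) simp_all
  then show ?thesis
    unfolding metric_Y by (simp add: to_region_def prod_dist_def dist_real_def)
qed

section \<open>The action on \<open>\<N> \<union> Z\<close>\<close>

definition "\<psi> g = map_prod (map_option (induced_action \<phi> g)) (\<phi> g)"

lemma \<psi>_Some [simp]: "\<psi> g (Some (p, t), q) = (Some (\<phi> g p, t), \<phi> g q)"
  by (simp add: \<psi>_def induced_action_def)

lemma \<psi>_None [simp]: "\<psi> g (None, z) = (None, \<phi> g z)"
  by (simp add: \<psi>_def)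

lemma \<psi>_G: "\<psi> g (G c) = G (induced_action \<phi> g c)"
  by (cases c) (simp add: G_eq induced_action_def)

lemma induced_action_in_C: "c \<in> C \<Longrightarrow> induced_action \<phi> g c \<in> C"
  using act_in_N act_in_bdN_iff by (cases c) (auto simp: mem_C induced_action_def)

lemma \<psi>_in_graph: "y \<in> G ` C \<Longrightarrow> \<psi> g y \<in> G ` C"
  using \<psi>_G induced_action_in_C by auto

lemma \<psi>_in_Y:
  assumes "y \<in> Y"
  shows "\<psi> g y \<in> Y"
proof -
  from assms consider "y \<in> G ` C" | z where "z \<in> Z" "y = (None, z)"
    unfolding Y_eq by blast
  then show ?thesis
  proof cases
    case 1
    then show ?thesis
      using \<psi>_in_graph Y_eq by blast
  next
    case 2
    then show ?thesis
      using act_in_Z Y_eq by simp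
  qed
qed

lemma \<psi>_zero: "y \<in> Y \<Longrightarrow> \<psi> 0 y = y"
  using Y_eq mem_C N_subset Z_subset act_zero by (auto simp: G_eq)

lemma \<psi>_add: "y \<in> Y \<Longrightarrow> \<psi> (g + h) y = \<psi> g (\<psi> h y)"
  using Y_eq mem_C N_subset Z_subset act_add by (auto simp: G_eq)

lemma \<psi>_minus: "y \<in> Y \<Longrightarrow> \<psi> (- g) (\<psi> g y) = y"
  using \<psi>_add[of y "- g" g] \<psi>_zero by simp

lemma continuous_map_\<psi>: "continuous_map topY topY (\<psi> g)"
proof (rule continuous_map_into_topY)
  have "continuous_map topY euclideanreal (scaled_height (height \<circ> \<phi> g))"
    using continuous_map_compose[OF continuous_map_act continuous_map_height]
      height_bounds act_in_Z act_in_bdN_iff bdN_subset height_Z height_bdN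
    by (intro continuous_map_scaled_height) auto
  then have "continuous_map topY (prod_topology X euclideanreal)
      (\<lambda>y. (\<phi> g (snd y), scaled_height (height \<circ> \<phi> g) y))"
    using continuous_map_compose[OF continuous_map_snd_topY continuous_map_act]
    by (simp add: continuous_map_pairwise o_def)
  moreover have "to_region (\<psi> g y) = (\<phi> g (snd y), scaled_height (height \<circ> \<phi> g) y)" for y
    by (cases y) (auto simp: to_region_def \<psi>_def scaled_height_def induced_action_def split: option.split)
  ultimately show "continuous_map topY (prod_topology X euclideanreal) (\<lambda>y. to_region (\<psi> g y))"
    by simp
qed (simp add: \<psi>_in_Y topspace_topY)

lemma homeomorphic_map_\<psi>: "homeomorphic_map topY topY (\<psi> g)"
proof -
  have "homeomorphic_maps topY topY (\<psi> g) (\<psi> (- g))"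
    unfolding homeomorphic_maps_def
    using continuous_map_\<psi> \<psi>_minus[of _ g] \<psi>_minus[of _ "- g"] topspace_topY by auto
  then show ?thesis
    using homeomorphic_map_maps by blast
qed

lemma top_action_\<psi>: "top_action \<psi> topY"
  unfolding top_action_def using homeomorphic_map_\<psi> \<psi>_zero \<psi>_add topspace_topY by auto

lemma topY_minus_Z: "topspace topY - {None} \<times> Z = G ` C"
  using topspace_topY Y_eq by (auto simp: G_eq)

lemma \<psi>_image_graph: "\<psi> g ` (G ` C) = G ` C"
proof
  show "G ` C \<subseteq> \<psi> g ` G ` C"
  proof
    fix y
    assume "y \<in> G ` C"
    then have "\<psi> (- g) y \<in> G ` C" "\<psi> g (\<psi> (- g) y) = y"
      using \<psi>_in_graph \<psi>_minus[of y "- g"] Y_eq by auto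
    then show "y \<in> \<psi> g ` G ` C"
      by (metis image_eqI)
  qed
qed (use \<psi>_in_graph in blast)

lemma top_action_\<psi>_graph: "top_action \<psi> (subtopology topY (G ` C))"
  unfolding top_action_def
proof (intro conjI allI ballI)
  show "homeomorphic_map (subtopology topY (G ` C)) (subtopology topY (G ` C)) (\<psi> g)" for g
    using homeomorphic_map_\<psi> \<psi>_image_graph topspace_topY Y_eq
    by (intro homeomorphic_map_subtopologies) auto
qed (use \<psi>_zero \<psi>_add topspace_topY in auto)

lemma fixed_point_free_action_\<psi>_graph: "fixed_point_free_action \<psi> (subtopology topY (G ` C))"
  using EZ_unfolded(4) mem_C topspace_topN
  unfolding fixed_point_free_action_def by (force simp: G_eq)

lemma continuous_map_snd_graph: "continuous_map (subtopology topY (G ` C)) topN snd"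
  using continuous_map_from_subtopology[OF continuous_map_snd_topY] mem_C
  unfolding topN_def by (auto simp: continuous_map_in_subtopology G_eq)

lemma properly_discontinuous_action_\<psi>_graph:
  "properly_discontinuous_action \<psi> (subtopology topY (G ` C))"
  unfolding properly_discontinuous_action_def
proof (intro allI impI)
  fix K
  assume "compactin (subtopology topY (G ` C)) K"
  then have "compactin topN (snd ` K)"
    using continuous_map_snd_graph by (rule image_compactin)
  then have "finite {g. \<phi> g ` snd ` K \<inter> snd ` K \<noteq> {}}"
    using EZ_unfolded(5) unfolding properly_discontinuous_action_def by blast
  moreover have "{g. \<psi> g ` K \<inter> K \<noteq> {}} \<subseteq> {g. \<phi> g ` snd ` K \<inter> snd ` K \<noteq> {}}"
    by (force simp: \<psi>_def)
  ultimately show "finite {g. \<psi> g ` K \<inter> K \<noteq> {}}"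
    by (rule finite_subset[rotated])
qed

lemma continuous_map_G: "continuous_map topC topY G"
proof (rule continuous_map_into_topY)
  show "continuous_map topC (prod_topology X euclideanreal) (\<lambda>c. to_region (G c))"
    using continuous_map_fst_topC_X continuous_map_scaled[OF continuous_map_height height_bdN]
    by (simp add: continuous_map_pairwise o_def to_region_def G_eq)
qed (use Y_eq C_def in blast)

lemma cocompact_action_\<psi>_graph: "cocompact_action \<psi> (subtopology topY (G ` C))"
proof -
  obtain K where K: "compactin topN K" "(\<Union>g. \<phi> g ` K) = N"
    using EZ_unfolded(6) topspace_topN unfolding cocompact_action_def by auto
  have "continuous_map topC (subtopology topY (G ` C)) G"
    using continuous_map_G by (simp add: continuous_map_in_subtopology C_def)
  then have compact: "compactin (subtopology topY (G ` C)) (G ` {c \<in> C. fst c \<in> K})"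
    using compactin_cylinder_over[OF K(1)] by (rule image_compactin[rotated])
  have "G (p, t) \<in> (\<Union>g. \<psi> g ` G ` {c \<in> C. fst c \<in> K})" if "(p, t) \<in> C" for p t
  proof -
    have "p \<in> (\<Union>g. \<phi> g ` K)"
      using K(2) that by (simp add: mem_C)
    then obtain g q where "q \<in> K" "p = \<phi> g q"
      by blast
    moreover have "q \<in> N"
      using K(1) \<open>q \<in> K\<close> compactin_subset_topspace topspace_topN by blast
    ultimately have "(q, t) \<in> C" and \<psi>_q: "\<psi> g (G (q, t)) = G (p, t)"
      using that act_in_bdN_iff by (auto simp: mem_C G_eq)
    with \<open>q \<in> K\<close> have "G (q, t) \<in> G ` {c \<in> C. fst c \<in> K}"
      by force
    with \<psi>_q have "G (p, t) \<in> \<psi> g ` G ` {c \<in> C. fst c \<in> K}"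
      by (rule image_eqI[OF sym])
    then show ?thesis
      by blast
  qed
  then have "topspace (subtopology topY (G ` C)) \<subseteq> (\<Union>g. \<psi> g ` G ` {c \<in> C. fst c \<in> K})"
    by auto
  moreover have "\<psi> g ` G ` {c \<in> C. fst c \<in> K} \<subseteq> topspace (subtopology topY (G ` C))" for g
    using image_mono[OF image_mono[of "{c \<in> C. fst c \<in> K}" C G], of "\<psi> g"] \<psi>_image_graph[of g]
      topspace_topY Y_eq by auto
  ultimately have "(\<Union>g. \<psi> g ` G ` {c \<in> C. fst c \<in> K}) = topspace (subtopology topY (G ` C))"
    by blast
  with compact show ?thesis
    unfolding cocompact_action_def by blast
qed

lemma snd_in_X: "y \<in> Y \<Longrightarrow> snd y \<in> topspace X"
  using Y_eq mem_C N_subset Z_subset by (auto simp: G_eq)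

lemma closedin_topY_Z: "closedin topY ({None} \<times> Z)"
proof -
  have "openin topCinf (Some ` C)"
    unfolding C_def by (rule openin_one_point_compactification_image_Some) simp
  moreover have "topspace topCinf - Some ` C = {None}"
    by (auto simp: topspace_topCinf)
  ultimately have "closedin topCinf {None}"
    by (metis closedin_diff closedin_topspace)
  then have "closedin topP ({None} \<times> topspace X)"
    unfolding topP_def by (simp add: closedin_prod_Times_iff)
  then have "closedin topY (Y \<inter> ({None} \<times> topspace X))"
    unfolding topY_eq by (rule closedin_subtopology_Int_closed)
  moreover have "Y \<inter> ({None} \<times> topspace X) = {None} \<times> Z"
    using Y_eq Z_subset by (auto simp: G_eq)
  ultimately show ?thesis
    by simp
qed

text \<open>A map of \<open>X\<close> is lifted to \<open>Y\<close> by moving the base point and lowering the height as far as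
  needed to stay below the graph of \<open>height\<close>.\<close>

definition "lift_map f y = of_region (f (snd y), min (scaled_height height y) (height (f (snd y))))"

lemma continuous_map_lift_map:
  assumes f: "continuous_map X X f"
  shows "continuous_map topY topY (lift_map f)"
proof -
  have fy: "continuous_map topY X (\<lambda>y. f (snd y))"
    using continuous_map_compose[OF continuous_map_snd_topY f] by (simp add: o_def)
  moreover have "continuous_map topY euclideanreal (scaled_height height)"
    using continuous_map_height height_bounds(1) height_Z height_bdN
    by (rule continuous_map_scaled_height)
  ultimately have "continuous_map topY euclideanreal
      (\<lambda>y. min (scaled_height height y) (height (f (snd y))))"
    using continuous_map_compose[OF fy continuous_map_height]
    by (intro continuous_map_real_min) (auto simp: o_def)
  with fy have "continuous_map topY (prod_topology X euclideanreal)
      (\<lambda>y. (f (snd y), min (scaled_height height y) (height (f (snd y)))))"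
    by (simp add: continuous_map_pairwise o_def)
  moreover have "(f (snd y), min (scaled_height height y) (height (f (snd y)))) \<in> R"
    if "y \<in> topspace topY" for y
  proof -
    have "y \<in> Y" "f (snd y) \<in> topspace X"
      using that topspace_topY snd_in_X[of y] continuous_map_image_subset_topspace[OF f] by auto
    then show ?thesis
      using scaled_height_bounds[of y height] height_bounds by (auto simp: R_def)
  qed
  ultimately have "continuous_map topY topR (\<lambda>y. (f (snd y), min (scaled_height height y) (height (f (snd y)))))"
    unfolding topR_def by (simp add: continuous_map_in_subtopology)
  from continuous_map_compose[OF this continuous_map_of_region] show ?thesis
    by (simp add: lift_map_def[abs_def] o_def)
qed

lemma mdist_lift_map_le:
  assumes "y \<in> Y" "f (snd y) \<in> topspace X"
  shows "mdist metric_Y (lift_map f y) y \<le> 2 * mdist m (f (snd y)) (snd y)"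
proof -
  define p q s where "p = snd y" and "q = f (snd y)" and "s = scaled_height height y"
  have "(q, min s (height q)) \<in> R"
    using assms scaled_height_bounds[of y height] height_bounds
    by (auto simp: R_def p_def q_def s_def)
  then have "to_region (lift_map f y) = (q, min s (height q))"
    using to_region_of_region by (simp add: lift_map_def p_def q_def s_def)
  then have "mdist metric_Y (lift_map f y) y \<le> mdist m q p + \<bar>min s (height q) - s\<bar>"
    using mdist_metric_Y_le[of "lift_map f y" y] by (simp add: to_region_def p_def s_def)
  also have "\<dots> \<le> 2 * mdist m q p"
  proof -
    have "s \<le> height p"
      using scaled_height_bounds[of y height] assms height_bounds by (simp add: p_def s_def)
    then have "\<bar>min s (height q) - s\<bar> \<le> \<bar>height q - height p\<bar>"
      by (auto simp: min_def)
    also have "\<dots> \<le> mdist m q p"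
      using height_Lipschitz assms snd_in_X by (simp add: p_def q_def)
    finally show ?thesis
      by simp
  qed
  finally show ?thesis
    by (simp add: p_def q_def)
qed

lemma Z_set_topY: "Z_set topY ({None} \<times> Z)"
  unfolding Z_set_def
proof (intro conjI exI[of _ metric_Y] allI impI)
  fix \<epsilon> :: real
  assume "\<epsilon> > 0"
  then obtain f where f: "continuous_map X X f" "\<forall>x\<in>topspace X. f x \<notin> Z \<and> mdist m (f x) x < \<epsilon> / 2"
    using push_off[of "\<epsilon> / 2"] by auto
  have "lift_map f y \<notin> {None} \<times> Z \<and> mdist metric_Y (lift_map f y) y < \<epsilon>" if "y \<in> topspace topY" for y
  proof -
    have "snd y \<in> topspace X" "f (snd y) \<in> topspace X"
      using that topspace_topY snd_in_X[of y] continuous_map_image_subset_topspace[OF f(1)] by auto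
    then show ?thesis
      using mdist_lift_map_le[of y f] f(2) that topspace_topY
      by (auto simp: lift_map_def of_region_def)
  qed
  with continuous_map_lift_map[OF f(1)]
  show "\<exists>f. continuous_map topY topY f \<and>
      (\<forall>y\<in>topspace topY. f y \<notin> {None} \<times> Z \<and> mdist metric_Y (f y) y < \<epsilon>)"
    by (intro exI[of _ "lift_map f"]) simp
qed (simp_all add: closedin_topY_Z metric_Y)

lemma Y_nonempty: "Y \<noteq> {}"
proof -
  have "topspace X \<noteq> {}"
    using EZ euclidean_retract_nonempty unfolding EZ_structure_via_def Z_structure_via_def by blast
  then obtain p where "p \<in> N"
    using N_dense[of "topspace X"] by blast
  then have "G (p, 0) \<in> Y"
    using Y_eq by (auto simp: mem_C)
  then show ?thesis
    by blast
qed

lemma compactin_height_ge: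
  assumes "\<epsilon> > 0"
  shows "compactin topN {p \<in> topspace X. \<epsilon> \<le> height p}"
proof -
  have "closedin X {p \<in> topspace X. height p \<in> {\<epsilon>..}}"
    using continuous_map_height by (rule closedin_continuous_map_preimage) simp
  moreover have "{p \<in> topspace X. \<epsilon> \<le> height p} \<subseteq> N"
    using assms height_Z by (force simp: N_def)
  ultimately show ?thesis
    unfolding topN_def using closedin_compact_space[OF EZ_unfolded(1)] by (simp add: compactin_subtopology)
qed

lemma \<psi>_image_subset_mball:
  assumes "K \<subseteq> Y" "y\<^sub>0 \<in> K" "\<phi> g ` snd ` K \<subseteq> mball_of m c r" "\<And>y. y \<in> K \<Longrightarrow> height (\<phi> g (snd y)) < r"
  shows "\<psi> g ` K \<subseteq> mball_of metric_Y (\<psi> g y\<^sub>0) (3 * r)"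
proof
  fix z
  assume "z \<in> \<psi> g ` K"
  then obtain y where "y \<in> K" "z = \<psi> g y"
    by blast
  have snd_\<psi>: "snd (\<psi> g y) = \<phi> g (snd y)" for y
    by (simp add: \<psi>_def)
  have in_Y: "\<psi> g y\<^sub>0 \<in> Y" "\<psi> g y \<in> Y"
    using assms(1,2) \<open>y \<in> K\<close> \<psi>_in_Y by blast+
  have "\<phi> g (snd y\<^sub>0) \<in> mball_of m c r" "\<phi> g (snd y) \<in> mball_of m c r"
    using assms(2,3) \<open>y \<in> K\<close> unfolding image_subset_iff by blast+
  then have "mdist m (\<phi> g (snd y\<^sub>0)) (\<phi> g (snd y)) \<le> mdist m c (\<phi> g (snd y\<^sub>0)) + mdist m c (\<phi> g (snd y))"
    and "mdist m c (\<phi> g (snd y\<^sub>0)) < r" "mdist m c (\<phi> g (snd y)) < r"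
    using mdist_triangle[of "\<phi> g (snd y\<^sub>0)" m c "\<phi> g (snd y)"] by (auto simp: mdist_commute)
  then have "mdist m (\<phi> g (snd y\<^sub>0)) (\<phi> g (snd y)) < 2 * r"
    by linarith
  moreover have "\<bar>scaled_height height (\<psi> g y\<^sub>0) - scaled_height height (\<psi> g y)\<bar> < r"
    using scaled_height_bounds[of "\<psi> g y\<^sub>0" height] scaled_height_bounds[of "\<psi> g y" height]
      assms(2,4) \<open>y \<in> K\<close> in_Y height_bounds snd_\<psi> by (smt (verit))
  ultimately have "mdist metric_Y (\<psi> g y\<^sub>0) (\<psi> g y) < 3 * r"
    using mdist_metric_Y_le[of "\<psi> g y\<^sub>0" "\<psi> g y"] by (simp add: snd_\<psi>)
  then show "z \<in> mball_of metric_Y (\<psi> g y\<^sub>0) (3 * r)"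
    using \<open>z = \<psi> g y\<close> in_Y metric_Y(2) by simp
qed

lemma Lebesgue_number_topY:
  assumes "\<And>U. U \<in> \<U> \<Longrightarrow> openin topY U" "topspace topY \<subseteq> \<Union>\<U>"
  obtains \<delta> where "\<delta> > 0" "\<And>y. y \<in> Y \<Longrightarrow> \<exists>U\<in>\<U>. mball_of metric_Y y \<delta> \<subseteq> U"
proof -
  have "compactin (mtopology_of metric_Y) (mspace metric_Y)"
    using compact_space_topY metric_Y topspace_topY by (simp add: compact_space_def)
  then show ?thesis
    using Metric_space.lebesgue_number[OF Metric_space_mspace_mdist, of metric_Y "mspace metric_Y" \<U>]
      assms metric_Y topspace_topY that
    unfolding mtopology_of_def mball_of_def by auto
qed

lemma finite_translates_not_in_mball:
  assumes "compactin topN K" "r > 0"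
  shows "finite {g. \<not> (\<exists>c\<in>topspace X. \<phi> g ` K \<subseteq> mball_of m c r)}"
proof -
  have "x \<in> (\<Union>c\<in>topspace X. mball_of m c r)" if "x \<in> topspace X" for x
  proof -
    have "mdist m x x = 0"
      using that mspace_m by simp
    with that \<open>r > 0\<close> mspace_m have "x \<in> mball_of m x r"
      by (simp add: \<open>mdist m x x = 0\<close>)
    with that show ?thesis
      by blast
  qed
  then have "(\<forall>V\<in>(\<lambda>c. mball_of m c r) ` topspace X. openin X V) \<and>
      topspace X \<subseteq> \<Union>((\<lambda>c. mball_of m c r) ` topspace X)"
    using openin_mball_m by blast
  moreover have "\<And>K \<U>. compactin topN K \<Longrightarrow> (\<forall>U\<in>\<U>. openin X U) \<and> topspace X \<subseteq> \<Union>\<U> \<Longrightarrow>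
      finite {g. \<not> (\<exists>U\<in>\<U>. \<phi> g ` K \<subseteq> U)}"
    using EZ_unfolded(7) unfolding null_translates_def topN_def N_def by blast
  ultimately have "finite {g. \<not> (\<exists>V\<in>(\<lambda>c. mball_of m c r) ` topspace X. \<phi> g ` K \<subseteq> V)}"
    using assms(1) by blast
  then show ?thesis
    by simp
qed

lemma \<psi>_image_in_cover:
  assumes "K \<subseteq> Y" "\<delta> > 0" "\<And>y. y \<in> Y \<Longrightarrow> \<exists>U\<in>\<U>. mball_of metric_Y y \<delta> \<subseteq> U"
    and "\<phi> g ` snd ` K \<inter> {p \<in> topspace X. \<delta> / 4 \<le> height p} = {}"
    and ball: "\<phi> g ` snd ` K \<subseteq> mball_of m c (\<delta> / 4)"
  shows "\<exists>U\<in>\<U>. \<psi> g ` K \<subseteq> U"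
proof (cases "K = {}")
  case False
  then obtain y\<^sub>0 where "y\<^sub>0 \<in> K"
    by blast
  have "height (\<phi> g (snd y)) < \<delta> / 4" if "y \<in> K" for y
  proof -
    have "\<phi> g (snd y) \<in> topspace X"
      using that assms(1) snd_in_X act_in_X by blast
    moreover have "\<phi> g (snd y) \<in> \<phi> g ` snd ` K"
      using that by blast
    ultimately have "\<not> \<delta> / 4 \<le> height (\<phi> g (snd y))"
      using assms(4) by blast
    then show ?thesis
      by simp
  qed
  then have "\<psi> g ` K \<subseteq> mball_of metric_Y (\<psi> g y\<^sub>0) (3 * (\<delta> / 4))"
    by (rule \<psi>_image_subset_mball[OF assms(1) \<open>y\<^sub>0 \<in> K\<close> ball])
  also have "\<dots> \<subseteq> mball_of metric_Y (\<psi> g y\<^sub>0) \<delta>"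
    using \<open>\<delta> > 0\<close> by (auto simp: subset_iff)
  finally show ?thesis
    using assms(3)[of "\<psi> g y\<^sub>0"] \<psi>_in_Y[of y\<^sub>0 g] assms(1) \<open>y\<^sub>0 \<in> K\<close> by (meson order_trans subsetD)
qed (use assms(3) Y_nonempty in blast)

text \<open>Far-away translates of a compactum are small: their base points by the null condition in
  \<open>X\<close>, their heights by proper discontinuity applied to the compactum where the height is
  bounded below.\<close>

lemma null_translates_\<psi>: "null_translates \<psi> topY ({None} \<times> Z)"
  unfolding null_translates_def topY_minus_Z
proof (intro allI impI)
  fix K \<U>
  assume K: "compactin (subtopology topY (G ` C)) K"
    and \<U>: "(\<forall>U\<in>\<U>. openin topY U) \<and> topspace topY \<subseteq> \<Union>\<U>"
  then obtain \<delta> where "\<delta> > 0" and \<delta>: "\<And>y. y \<in> Y \<Longrightarrow> \<exists>U\<in>\<U>. mball_of metric_Y y \<delta> \<subseteq> U"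
    using Lebesgue_number_topY by blast
  have "K \<subseteq> Y"
    using compactin_subset_topspace[OF K] topspace_topY by auto
  define L where "L = {p \<in> topspace X. \<delta> / 4 \<le> height p}"
  have "compactin topN (snd ` K)"
    using K continuous_map_snd_graph by (rule image_compactin)
  moreover have "compactin topN L"
    unfolding L_def using \<open>\<delta> > 0\<close> by (intro compactin_height_ge) simp
  ultimately have finite_A: "finite {g. \<phi> g ` (snd ` K \<union> L) \<inter> (snd ` K \<union> L) \<noteq> {}}"
    using EZ_unfolded(5) compactin_Un unfolding properly_discontinuous_action_def by blast
  have finite_B: "finite {g. \<not> (\<exists>c\<in>topspace X. \<phi> g ` snd ` K \<subseteq> mball_of m c (\<delta> / 4))}"
    using \<open>compactin topN (snd ` K)\<close> \<open>\<delta> > 0\<close> by (intro finite_translates_not_in_mball) auto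
  have "{g. \<not> (\<exists>U\<in>\<U>. \<psi> g ` K \<subseteq> U)} \<subseteq>
      {g. \<phi> g ` (snd ` K \<union> L) \<inter> (snd ` K \<union> L) \<noteq> {}} \<union>
      {g. \<not> (\<exists>c\<in>topspace X. \<phi> g ` snd ` K \<subseteq> mball_of m c (\<delta> / 4))}"
  proof (rule subsetI, rule ccontr)
    fix g
    assume "g \<in> {g. \<not> (\<exists>U\<in>\<U>. \<psi> g ` K \<subseteq> U)}"
      and "g \<notin> {g. \<phi> g ` (snd ` K \<union> L) \<inter> (snd ` K \<union> L) \<noteq> {}} \<union>
        {g. \<not> (\<exists>c\<in>topspace X. \<phi> g ` snd ` K \<subseteq> mball_of m c (\<delta> / 4))}"
    then have disjoint: "\<phi> g ` (snd ` K \<union> L) \<inter> (snd ` K \<union> L) = {}"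
      and "\<exists>c\<in>topspace X. \<phi> g ` snd ` K \<subseteq> mball_of m c (\<delta> / 4)"
      and not_covered: "\<not> (\<exists>U\<in>\<U>. \<psi> g ` K \<subseteq> U)"
      by simp_all
    then obtain c where ball: "\<phi> g ` snd ` K \<subseteq> mball_of m c (\<delta> / 4)"
      by blast
    from disjoint have "\<phi> g ` snd ` K \<inter> {p \<in> topspace X. \<delta> / 4 \<le> height p} = {}"
      unfolding L_def by blast
    from \<psi>_image_in_cover[OF \<open>K \<subseteq> Y\<close> \<open>\<delta> > 0\<close> \<delta> this ball] not_covered show False
      by contradiction
  qed
  with finite_A finite_B show "finite {g. \<not> (\<exists>U\<in>\<U>. \<psi> g ` K \<subseteq> U)}"
    by (meson finite_Un finite_subset)
qed

lemma euclidean_retract_topY: "euclidean_retract topY"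
proof -
  have "euclidean_retract X"
    using EZ unfolding EZ_structure_via_def Z_structure_via_def by blast
  then obtain n T where "T retract_of_space Euclidean_space n"
      and "topR homeomorphic_space subtopology (Euclidean_space n) T"
    unfolding topR_def R_def
    by (rule euclidean_retract_region_under_graph[OF _ continuous_map_height height_bounds(1)])
  moreover have "topY homeomorphic_space topR"
    using homeomorphic_maps_to_region homeomorphic_space_def by blast
  moreover have "metrizable_space topY"
    using metric_Y(1) Metric_space.metrizable_space_mtopology[OF Metric_space_mspace_mdist]
    unfolding mtopology_of_def by metis
  ultimately show ?thesis
    unfolding euclidean_retract_def using compact_space_topY homeomorphic_space_trans by blast
qed

lemma EZ_structure_topY: "EZ_structure_via \<psi> topY ({None} \<times> Z)"
  unfolding EZ_structure_via_def Z_structure_via_def topY_minus_Z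
  using euclidean_retract_topY Z_set_topY top_action_\<psi>_graph fixed_point_free_action_\<psi>_graph
    properly_discontinuous_action_\<psi>_graph cocompact_action_\<psi>_graph null_translates_\<psi> top_action_\<psi>
  by blast

end

theorem lemma2p3:
  fixes X :: "'a topology" and Z :: "'a set" and \<phi> :: "'g::group_add \<Rightarrow> 'a \<Rightarrow> 'a"
  assumes EZ: "EZ_structure_via \<phi> X Z"
    and mfd: "is_manifold (subtopology X (topspace X - Z))"
  shows "compactified_carrier X Z - graph_embedding ` topspace (mapping_cyl (subtopology X (topspace X - Z)))
           = {None} \<times> Z
       \<and> (\<exists>\<psi>. EZ_structure_via \<psi> (compactified_space X Z)
                 (compactified_carrier X Z - graph_embedding ` topspace (mapping_cyl (subtopology X (topspace X - Z))))
             \<and> (\<forall>g. \<forall>x\<in>topspace (mapping_cyl (subtopology X (topspace X - Z))).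
                   \<psi> g (graph_embedding x) = graph_embedding (induced_action \<phi> g x)))"
proof -
  obtain m where "mtopology_of m = X"
    and "\<forall>\<epsilon>>0. \<exists>f. continuous_map X X f \<and> (\<forall>x\<in>topspace X. f x \<notin> Z \<and> mdist m (f x) x < \<epsilon>)"
    using EZ unfolding EZ_structure_via_def Z_structure_via_def Z_set_def by blast
  with EZ mfd interpret EZ_manifold X Z \<phi> m
    by unfold_locales auto
  have "compactified_carrier X Z - graph_embedding ` topspace (mapping_cyl (subtopology X (topspace X - Z)))
      = {None} \<times> Z"
    using Y_minus_graph unfolding Y_def C_def topC_def topN_def N_def .
  with EZ_structure_topY \<psi>_G show ?thesis
    unfolding topY_def by auto
qed

end
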